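(* Let $u$ and $v$ be vertices of $G$. When routing from $u$ to $v$, the routing algorithm reaches $v$ after traversing at most $O(\log n)$ edges.
   Context: Let $T$ be a rooted tree on $n$ vertices with positive edge weights; $\delta_T(a,b)$ is the weight of the path in $T$ from $a$ to $b$. Ancestor/descendant refer to $T$, and a vertex counts as its own ancestor and descendant; "deepest"/"highest" refer to depth in $T$. $T_v$ is the subtree of $T$ rooted at $v$. For every non-leaf vertex $v$ fix a child $c_1(v)$ with $|T_{c_1(v)}|$ maximal; edges $(v,c_1(v))$ are leftmost. A subtree $R$ of $T$ is rooted at its vertex closest to the root, $rt(R)$, and inherits the leftmost labelling; $R_v$ is the subtree of $R$ rooted at $v$. $P_R(v)$ is the longest downward path from $v$ in $R$ using only leftmost edges, with last vertex $l(v)$; $l(R):=l(rt(R))$. A vertex $v$ of $R$ is $d$-balanced if $|R_{c_1(v)}|\le |R|-d$ (with $|R_{c_1(v)}|=0$ if $c_1(v)$ is undefined or not in $R$); $b_d(v)$ is the first $d$-balanced vertex on $P_R(v)$, or NULL. $CV(R,d)=\emptyset$ if $b_d(rt(R))$ is NULL, else $\{b\}\cup\bigcup_w CV(R_w,d)$ with $b=b_d(rt(R))$ and $w$ ranging over children of $b$ in $R$. Fix an integer $k\ge4$; for a subtree $R$ with $m$ vertices, $C_R=V(R)$ if $k\ge m/2-1$, else $C_R=CV(R,m/k)\cup\{l(R),rt(R)\}$. Canonical subtrees: $T$ is canonical; if $R$ is canonical, each component of $R$ minus $C_R$ is canonical. Each vertex $v$ lies in $C_R$ for exactly one canonical $R$,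 denoted $T^v$. The spanner $G$ has vertex set $V(T)$ and edges: all edges of $T$, and all pairs of distinct vertices of $C_R$ for every canonical $R$; edge $(a,b)$ has weight $\delta_T(a,b)$. Routing algorithm from current vertex $u$ to destination $v$, repeated until $v$ is reached: Case 0: if $v$ is adjacent to $u$, move to $v$. Case 1: $u$ is an ancestor of $v$; let $X$ be the vertices of $C_{T^u}$ that are ancestors of $v$, $x$ the deepest; move to $x$, then to the child of $x$ that is an ancestor of $v$. Case 2: $u$ is a descendant of $v$; let $X$ be the vertices of $C_{T^u}$ that are descendants of $v$ and ancestors of $u$, $x$ the highest; move to $x$, then to the parent of $x$. Case 3: $u$ is neither; let $X$ be the vertices of $C_{T^u}$ that are ancestors of $v$ but not of $u$, and $Y$ those that are ancestors of $u$ but not of $v$, $y$ the highest vertex of $Y$. Case 3 a): $X=\emptyset$: move to $y$, then to the parent of $y$. Case 3 b): $X\neq\emptyset$: with $x$ the deepest vertex of $X$ and $x'$ the child of $x$ that is an ancestor of $v$, move to $x$, then to $x'$. (Moving to the current vertex means staying.) *)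

theory Defs
  imports Complex_Main
begin

definition anc :: "('a \<Rightarrow> 'a) \<Rightarrow> 'a \<Rightarrow> 'a \<Rightarrow> bool" where
  "anc p a b \<longleftrightarrow> (\<exists>i. (p ^^ i) b = a)"

definition rooted_tree :: "'a set \<Rightarrow> 'a \<Rightarrow> ('a \<Rightarrow> 'a) \<Rightarrow> bool" where
  "rooted_tree V r p \<longleftrightarrow> finite V \<and> r \<in> V \<and> p r = r \<and> (\<forall>v\<in>V. p v \<in> V) \<and> (\<forall>v\<in>V. anc p r v)"

definition children :: "'a set \<Rightarrow> 'a \<Rightarrow> ('a \<Rightarrow> 'a) \<Rightarrow> 'a \<Rightarrow> 'a set" where
  "children V r p v = {w \<in> V. w \<noteq> r \<and> p w = v}"

definition desc :: "'a set \<Rightarrow> ('a \<Rightarrow> 'a) \<Rightarrow> 'a \<Rightarrow> 'a set" where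
  "desc V p v = {w \<in> V. anc p v w}"

definition leftmost_choice :: "'a set \<Rightarrow> 'a \<Rightarrow> ('a \<Rightarrow> 'a) \<Rightarrow> ('a \<Rightarrow> 'a) \<Rightarrow> bool" where
  "leftmost_choice V r p c1 \<longleftrightarrow> (\<forall>v\<in>V. children V r p v \<noteq> {} \<longrightarrow>
      c1 v \<in> children V r p v \<and>
      (\<forall>w\<in>children V r p v. card (desc V p w) \<le> card (desc V p (c1 v))))"

(* a subtree of T (connected vertex set), identified with its vertex set *)
definition is_subtree :: "'a set \<Rightarrow> ('a \<Rightarrow> 'a) \<Rightarrow> 'a set \<Rightarrow> bool" where
  "is_subtree V p S \<longleftrightarrow> S \<subseteq> V \<and> S \<noteq> {} \<and>
     (\<exists>t\<in>S. \<forall>w\<in>S. anc p t w \<and> (\<forall>x. anc p t x \<and> anc p x w \<longrightarrow> x \<in> S))"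

definition rt :: "('a \<Rightarrow> 'a) \<Rightarrow> 'a set \<Rightarrow> 'a" where
  "rt p R = (THE t. t \<in> R \<and> (\<forall>w\<in>R. anc p t w))"

definition subR :: "('a \<Rightarrow> 'a) \<Rightarrow> 'a set \<Rightarrow> 'a \<Rightarrow> 'a set" where
  "subR p R v = {w \<in> R. anc p v w}"

definition lstep :: "'a set \<Rightarrow> 'a \<Rightarrow> ('a \<Rightarrow> 'a) \<Rightarrow> ('a \<Rightarrow> 'a) \<Rightarrow> 'a set \<Rightarrow> 'a \<Rightarrow> bool" where
  "lstep V r p c1 R w \<longleftrightarrow> children V r p w \<noteq> {} \<and> c1 w \<in> R"

definition onP :: "'a set \<Rightarrow> 'a \<Rightarrow> ('a \<Rightarrow> 'a) \<Rightarrow> ('a \<Rightarrow> 'a) \<Rightarrow> 'a set \<Rightarrow> 'a \<Rightarrow> 'a \<Rightarrow> bool" where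
  "onP V r p c1 R v w \<longleftrightarrow> (\<exists>i. w = (c1 ^^ i) v \<and> (\<forall>j<i. lstep V r p c1 R ((c1 ^^ j) v)))"

definition lend :: "'a set \<Rightarrow> 'a \<Rightarrow> ('a \<Rightarrow> 'a) \<Rightarrow> ('a \<Rightarrow> 'a) \<Rightarrow> 'a set \<Rightarrow> 'a \<Rightarrow> 'a" where
  "lend V r p c1 R v = (THE w. onP V r p c1 R v w \<and> \<not> lstep V r p c1 R w)"

definition csize :: "'a set \<Rightarrow> 'a \<Rightarrow> ('a \<Rightarrow> 'a) \<Rightarrow> ('a \<Rightarrow> 'a) \<Rightarrow> 'a set \<Rightarrow> 'a \<Rightarrow> nat" where
  "csize V r p c1 R v = (if lstep V r p c1 R v then card (subR p R (c1 v)) else 0)"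

definition balanced :: "'a set \<Rightarrow> 'a \<Rightarrow> ('a \<Rightarrow> 'a) \<Rightarrow> ('a \<Rightarrow> 'a) \<Rightarrow> 'a set \<Rightarrow> real \<Rightarrow> 'a \<Rightarrow> bool" where
  "balanced V r p c1 R d v \<longleftrightarrow> real (csize V r p c1 R v) \<le> real (card R) - d"

definition bfirst :: "'a set \<Rightarrow> 'a \<Rightarrow> ('a \<Rightarrow> 'a) \<Rightarrow> ('a \<Rightarrow> 'a) \<Rightarrow> 'a set \<Rightarrow> real \<Rightarrow> 'a \<Rightarrow> 'a option" where
  "bfirst V r p c1 R d v =
     (if \<exists>w. onP V r p c1 R v w \<and> balanced V r p c1 R d w
      then Some (THE w. onP V r p c1 R v w \<and> balanced V r p c1 R d w \<and>
                 (\<forall>w'. onP V r p c1 R v w' \<and> balanced V r p c1 R d w' \<longrightarrow> anc p w w'))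
      else None)"

inductive inCV :: "'a set \<Rightarrow> 'a \<Rightarrow> ('a \<Rightarrow> 'a) \<Rightarrow> ('a \<Rightarrow> 'a) \<Rightarrow> 'a set \<Rightarrow> real \<Rightarrow> 'a \<Rightarrow> bool"
  for V r p c1 where
  cv_here: "bfirst V r p c1 R d (rt p R) = Some b \<Longrightarrow> inCV V r p c1 R d b"
| cv_rec: "bfirst V r p c1 R d (rt p R) = Some b \<Longrightarrow> w \<in> children V r p b \<Longrightarrow> w \<in> R \<Longrightarrow>
           inCV V r p c1 (subR p R w) d x \<Longrightarrow> inCV V r p c1 R d x"

definition Cset :: "'a set \<Rightarrow> 'a \<Rightarrow> ('a \<Rightarrow> 'a) \<Rightarrow> ('a \<Rightarrow> 'a) \<Rightarrow> nat \<Rightarrow> 'a set \<Rightarrow> 'a set" where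
  "Cset V r p c1 k R =
     (if real k \<ge> real (card R) / 2 - 1 then R
      else {x. inCV V r p c1 R (real (card R) / real k) x} \<union> {lend V r p c1 R (rt p R), rt p R})"

definition is_component :: "'a set \<Rightarrow> ('a \<Rightarrow> 'a) \<Rightarrow> 'a set \<Rightarrow> 'a set \<Rightarrow> bool" where
  "is_component V p A S \<longleftrightarrow> is_subtree V p S \<and> S \<subseteq> A \<and>
     (\<forall>S'. is_subtree V p S' \<and> S \<subseteq> S' \<and> S' \<subseteq> A \<longrightarrow> S' = S)"

inductive canonical :: "'a set \<Rightarrow> 'a \<Rightarrow> ('a \<Rightarrow> 'a) \<Rightarrow> ('a \<Rightarrow> 'a) \<Rightarrow> nat \<Rightarrow> 'a set \<Rightarrow> bool"
  for V r p c1 k where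
  can_top: "canonical V r p c1 k V"
| can_rec: "canonical V r p c1 k R \<Longrightarrow> is_component V p (R - Cset V r p c1 k R) S \<Longrightarrow>
            canonical V r p c1 k S"

definition CT :: "'a set \<Rightarrow> 'a \<Rightarrow> ('a \<Rightarrow> 'a) \<Rightarrow> ('a \<Rightarrow> 'a) \<Rightarrow> nat \<Rightarrow> 'a \<Rightarrow> 'a set" where
  "CT V r p c1 k u = Cset V r p c1 k (THE R. canonical V r p c1 k R \<and> u \<in> Cset V r p c1 k R)"

definition adjG :: "'a set \<Rightarrow> 'a \<Rightarrow> ('a \<Rightarrow> 'a) \<Rightarrow> ('a \<Rightarrow> 'a) \<Rightarrow> nat \<Rightarrow> 'a \<Rightarrow> 'a \<Rightarrow> bool" where
  "adjG V r p c1 k a b \<longleftrightarrow> a \<in> V \<and> b \<in> V \<and> a \<noteq> b \<and>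
     ((b \<noteq> r \<and> p b = a) \<or> (a \<noteq> r \<and> p a = b) \<or>
      (\<exists>R. canonical V r p c1 k R \<and> a \<in> Cset V r p c1 k R \<and> b \<in> Cset V r p c1 k R))"

definition deepest :: "('a \<Rightarrow> 'a) \<Rightarrow> 'a set \<Rightarrow> 'a" where
  "deepest p X = (THE x. x \<in> X \<and> (\<forall>y\<in>X. anc p y x))"

definition highest :: "('a \<Rightarrow> 'a) \<Rightarrow> 'a set \<Rightarrow> 'a" where
  "highest p X = (THE x. x \<in> X \<and> (\<forall>y\<in>X. anc p x y))"

definition child_toward :: "'a set \<Rightarrow> 'a \<Rightarrow> ('a \<Rightarrow> 'a) \<Rightarrow> 'a \<Rightarrow> 'a \<Rightarrow> 'a" where
  "child_toward V r p x v = (THE c. c \<in> children V r p x \<and> anc p c v)"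

definition mv :: "'a \<Rightarrow> 'a \<Rightarrow> nat" where
  "mv a b = (if a = b then 0 else 1)"

(* one iteration of the routing algorithm from u towards v:
   returns (new current vertex, number of edges traversed in this iteration) *)
definition route_step :: "'a set \<Rightarrow> 'a \<Rightarrow> ('a \<Rightarrow> 'a) \<Rightarrow> ('a \<Rightarrow> 'a) \<Rightarrow> nat \<Rightarrow> 'a \<Rightarrow> 'a \<Rightarrow> 'a \<times> nat" where
  "route_step V r p c1 k v u =
    (let C = CT V r p c1 k u in
     if adjG V r p c1 k u v then (v, 1)
     else if anc p u v then
       (let x = deepest p {x \<in> C. anc p x v} in (child_toward V r p x v, mv u x + 1))
     else if anc p v u then
       (let x = highest p {x \<in> C. anc p v x \<and> anc p x u} in (p x, mv u x + 1))
     else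
       (let X = {x \<in> C. anc p x v \<and> \<not> anc p x u};
            Y = {y \<in> C. anc p y u \<and> \<not> anc p y v};
            y = highest p Y in
        if X = {} then (p y, mv u y + 1)
        else (let x = deepest p X in (child_toward V r p x v, mv u x + 1))))"

definition route_pos :: "'a set \<Rightarrow> 'a \<Rightarrow> ('a \<Rightarrow> 'a) \<Rightarrow> ('a \<Rightarrow> 'a) \<Rightarrow> nat \<Rightarrow> 'a \<Rightarrow> 'a \<Rightarrow> nat \<Rightarrow> 'a" where
  "route_pos V r p c1 k u v i = ((\<lambda>x. fst (route_step V r p c1 k v x)) ^^ i) u"

end

theory Submission
  imports Defs
begin

text \<open>The canonical subtrees form a laminar family; the level of one of them is the number of
  canonical subtrees strictly containing it. A component \<open>S\<close> of \<open>R - C\<^sub>R\<close> avoids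
  \<open>CV(R, |R|/k)\<close>, and a subtree avoiding \<open>CV(R, d)\<close> has fewer than \<open>d\<close> vertices: either it
  misses the subtree below \<open>b\<^sub>d(rt R)\<close>, which has more than \<open>|R| - d\<close> vertices, or it lies
  below a child of that vertex, where \<open>CV\<close> recurses. Hence \<open>|S| < |R|/k \<le> |R|/2\<close>, and all
  levels are at most some \<open>L \<le> log\<^sub>2 n\<close>.

  Each round of the routing algorithm traverses at most two edges. Fix a target \<open>t\<close> (the
  destination \<open>v\<close>, or, while \<open>u\<close> and \<open>v\<close> are unrelated, the child of their lowest common
  ancestor towards \<open>u\<close>) and a canonical \<open>K\<close> containing the current vertex \<open>u\<close> and \<open>t\<close>.
  Unless a round ends at \<open>v\<close>, the new vertex \<open>z\<close> either leaves \<open>T\<^sup>u\<close> along an edge of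
  \<open>T\<close>, so that \<open>T\<^sup>z \<subseteq> K\<close> is the parent of \<open>T\<^sup>u\<close>, or (if \<open>t \<in> T\<^sup>u\<close>) enters the
  component of \<open>T\<^sup>u - C(T\<^sup>u)\<close> containing \<open>t\<close>, and then lies in its \<open>C\<close>-set. Either way the
  potential \<open>2(L - level K) + (level T\<^sup>u - level K)\<close> drops, for a suitable new \<open>K\<close>. It is
  at most \<open>3L\<close> initially and again when the target switches to \<open>v\<close>, so the route arrives
  within \<open>6L + 2\<close> rounds, i.e. after at most \<open>12L + 4 \<le> 16 log\<^sub>2 n\<close> edges.\<close>

locale tree =
  fixes V :: "'a set" and r :: 'a and p :: "'a \<Rightarrow> 'a"
  assumes rooted_tree: "rooted_tree V r p"
begin

lemma finite_V: "finite V" and root_in_V: "r \<in> V" and parent_root: "p r = r"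
  and parent_in_V: "x \<in> V \<Longrightarrow> p x \<in> V"
  and anc_root: "x \<in> V \<Longrightarrow> anc p r x"
  using rooted_tree unfolding rooted_tree_def by auto

lemma anc_refl[simp]: "anc p a a"
  unfolding anc_def by (metis funpow_0)

lemma anc_trans: assumes "anc p a b" "anc p b c" shows "anc p a c"
proof -
  obtain i j where "(p^^i) b = a" "(p^^j) c = b" using assms unfolding anc_def by auto
  then have "(p^^(i+j)) c = a" by (simp add: funpow_add)
  then show ?thesis unfolding anc_def by blast
qed

lemma anc_parent: "anc p (p b) b"
  unfolding anc_def by (rule exI[of _ 1]) simp

lemma anc_linear: "anc p a x \<Longrightarrow> anc p b x \<Longrightarrow> anc p a b \<or> anc p b a"
proof -
  assume "anc p a x" "anc p b x"
  then obtain i j where i: "(p^^i) x = a" and j: "(p^^j) x = b" unfolding anc_def by auto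
  show ?thesis
  proof (cases "i \<le> j")
    case True
    then obtain d where d: "j = d + i" by (metis le_add_diff_inverse2)
    then have "(p^^d) a = b" using i j by (simp add: funpow_add)
    then show ?thesis unfolding anc_def by auto
  next
    case False
    then obtain d where d: "i = d + j" by (metis le_add_diff_inverse2 nat_le_linear)
    then have "(p^^d) b = a" using i j by (simp add: funpow_add)
    then show ?thesis unfolding anc_def by auto
  qed
qed

lemma anc_to_parent: assumes "anc p a b" "a \<noteq> b" shows "anc p a (p b)"
proof -
  obtain i where i: "(p^^i) b = a" using assms unfolding anc_def by auto
  then obtain j where "i = Suc j" using assms by (cases i) auto
  then have "(p^^j) (p b) = a" using i by (simp add: funpow_Suc_right del: funpow.simps)
  then show ?thesis unfolding anc_def by auto
qed

lemma funpow_parent_in_V: "x \<in> V \<Longrightarrow> (p^^i) x \<in> V"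
  by (induction i) (auto simp: parent_in_V)

lemma funpow_parent_root: "(p^^i) r = r"
  by (induction i) (auto simp: parent_root)

definition depth :: "'a \<Rightarrow> nat" where "depth x = (LEAST i. (p^^i) x = r)"

lemma funpow_depth: "x \<in> V \<Longrightarrow> (p^^(depth x)) x = r"
  using anc_root[of x] unfolding depth_def anc_def by (auto intro: LeastI)

lemma depth_le: "(p^^i) x = r \<Longrightarrow> depth x \<le> i"
  unfolding depth_def by (rule Least_le)

lemma depth_root: "depth r = 0"
  using depth_le[of 0 r] by simp

lemma depth_0_root: "x \<in> V \<Longrightarrow> depth x = 0 \<Longrightarrow> x = r"
  using funpow_depth[of x] by simp

lemma depth_parent: assumes "x \<in> V" "x \<noteq> r" shows "depth x = Suc (depth (p x))"
proof -
  have px: "p x \<in> V" using parent_in_V assms by auto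
  have "(p^^(Suc (depth (p x)))) x = r"
    using funpow_depth[OF px] by (simp add: funpow_Suc_right del: funpow.simps)
  hence le: "depth x \<le> Suc (depth (p x))" by (rule depth_le)
  have "depth x \<noteq> 0" using depth_0_root assms by auto
  then obtain m where m: "depth x = Suc m" by (cases "depth x") auto
  have "(p^^m) (p x) = r"
    using funpow_depth[OF assms(1)] m by (simp add: funpow_Suc_right del: funpow.simps)
  hence "depth (p x) \<le> m" by (rule depth_le)
  thus ?thesis using le m by simp
qed

lemma anc_in_V: "anc p a b \<Longrightarrow> b \<in> V \<Longrightarrow> a \<in> V"
  unfolding anc_def using funpow_parent_in_V by auto

lemma depth_funpow:
  "b \<in> V \<Longrightarrow> depth ((p^^i) b) \<le> depth b \<and> ((p^^i) b \<noteq> b \<longrightarrow> depth ((p^^i) b) < depth b)"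
proof (induction i)
  case 0 then show ?case by simp
next
  case (Suc i)
  define z where "z = (p^^i) b"
  have zV: "z \<in> V" using funpow_parent_in_V Suc.prems z_def by auto
  have e: "(p^^Suc i) b = p z" by (simp add: z_def)
  show ?case
  proof (cases "z = r")
    case True
    have "(p^^Suc i) b = r" using e parent_root True by simp
    moreover have "r \<noteq> b \<Longrightarrow> 0 < depth b" using depth_0_root[OF Suc.prems] by (cases "depth b") auto
    ultimately show ?thesis using depth_root by auto
  next
    case False
    then show ?thesis using e depth_parent[OF zV False] Suc z_def by auto
  qed
qed

lemma anc_depth_le: "anc p a b \<Longrightarrow> b \<in> V \<Longrightarrow> depth a \<le> depth b"
  unfolding anc_def using depth_funpow by blast

lemma anc_depth_less: "anc p a b \<Longrightarrow> b \<in> V \<Longrightarrow> a \<noteq> b \<Longrightarrow> depth a < depth b"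
  unfolding anc_def using depth_funpow by blast

lemma anc_antisym: assumes "anc p a b" "anc p b a" "b \<in> V" shows "a = b"
proof (rule ccontr)
  assume ne: "a \<noteq> b"
  have aV: "a \<in> V" using anc_in_V assms by blast
  have "depth a < depth b" using anc_depth_less assms ne by blast
  moreover have "depth b \<le> depth a" using anc_depth_le assms aV by blast
  ultimately show False by simp
qed

lemma anc_root_eq: "anc p a r \<Longrightarrow> a = r"
  unfolding anc_def using funpow_parent_root by auto

lemma childrenD: "c \<in> children V r p x \<Longrightarrow> c \<in> V \<and> c \<noteq> r \<and> p c = x \<and> x \<in> V"
  unfolding children_def using parent_in_V by auto

lemma children_parentI: "c \<in> V \<Longrightarrow> c \<noteq> r \<Longrightarrow> c \<in> children V r p (p c)"
  unfolding children_def by auto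

lemma depth_child: "c \<in> children V r p x \<Longrightarrow> depth c = Suc (depth x)"
  using childrenD depth_parent by metis

lemma child_not_anc_parent: assumes "c \<in> children V r p x" shows "\<not> anc p c x"
proof
  assume "anc p c x"
  then have "depth c \<le> depth x" using anc_depth_le childrenD[OF assms] by blast
  then show False using depth_child[OF assms] by simp
qed

lemma anc_child: "c \<in> children V r p x \<Longrightarrow> anc p x c"
  using childrenD anc_parent by metis

lemma proper_descendant_parent:
  assumes "anc p a b" "a \<noteq> b" "b \<in> V" shows "b \<in> children V r p (p b) \<and> anc p a (p b)"
proof -
  have "b \<noteq> r" using assms anc_root_eq by blast
  then show ?thesis using children_parentI[OF assms(3)] anc_to_parent[OF assms(1,2)] by blast
qed

lemma exists_child_anc: "anc p a b \<Longrightarrow> a \<noteq> b \<Longrightarrow> b \<in> V \<Longrightarrow> \<exists>c\<in>children V r p a. anc p c b"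
proof (induction "depth b" arbitrary: b rule: less_induct)
  case less
  have br: "b \<noteq> r" using less anc_root_eq by auto
  have pb: "p b \<in> V" using parent_in_V less by auto
  have a: "anc p a (p b)" using anc_to_parent[OF less.prems(1,2)] .
  show ?case
  proof (cases "p b = a")
    case True
    have "b \<in> children V r p a" using children_parentI[of b] less br True by auto
    then show ?thesis by (intro bexI[of _ b]) auto
  next
    case False
    have "depth (p b) < depth b" using depth_parent[of b] less br by auto
    then obtain c where "c \<in> children V r p a" "anc p c (p b)"
      using less(1)[of "p b"] a False pb by auto
    then show ?thesis using anc_trans anc_parent by metis
  qed
qed

lemma children_anc_unique:
  assumes "c \<in> children V r p a" "c' \<in> children V r p a" "anc p c b" "anc p c' b"
  shows "c = c'"
proof (rule ccontr)
  assume ne: "c \<noteq> c'"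
  have "anc p c c' \<or> anc p c' c" using anc_linear assms by blast
  then show False
  proof
    assume "anc p c c'"
    then have "anc p c (p c')" using anc_to_parent ne by blast
    then show False using childrenD[OF assms(2)] child_not_anc_parent[OF assms(1)] by simp
  next
    assume "anc p c' c"
    then have "anc p c' (p c)" using anc_to_parent ne by metis
    then show False using childrenD[OF assms(1)] child_not_anc_parent[OF assms(2)] by simp
  qed
qed

abbreviation subtree where "subtree S \<equiv> is_subtree V p S"

lemma subtreeD: assumes "subtree S"
  shows "S \<subseteq> V" "S \<noteq> {}" "rt p S \<in> S" "\<And>w. w \<in> S \<Longrightarrow> anc p (rt p S) w"
    "\<And>w x. w \<in> S \<Longrightarrow> anc p (rt p S) x \<Longrightarrow> anc p x w \<Longrightarrow> x \<in> S"
proof -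
  obtain t where t1: "t \<in> S" and t2: "\<And>w. w \<in> S \<Longrightarrow> anc p t w"
    and t3: "\<And>w x. w \<in> S \<Longrightarrow> anc p t x \<Longrightarrow> anc p x w \<Longrightarrow> x \<in> S"
    using assms unfolding is_subtree_def by metis
  have SV: "S \<subseteq> V" using assms unfolding is_subtree_def by simp
  have eq: "rt p S = t" unfolding rt_def
  proof (rule the_equality)
    show "t \<in> S \<and> (\<forall>w\<in>S. anc p t w)" using t1 t2 by simp
  next
    fix t' assume h: "t' \<in> S \<and> (\<forall>w\<in>S. anc p t' w)"
    then have "anc p t' t" using t1 by simp
    moreover have "anc p t t'" using t2 h by simp
    moreover have "t \<in> V" using SV t1 by blast
    ultimately show "t' = t" using anc_antisym by blast
  qed
  show "S \<subseteq> V" by (rule SV)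
  show "S \<noteq> {}" using t1 by blast
  show "rt p S \<in> S" unfolding eq by (rule t1)
  show "\<And>w. w \<in> S \<Longrightarrow> anc p (rt p S) w" unfolding eq by (rule t2)
  show "\<And>w x. w \<in> S \<Longrightarrow> anc p (rt p S) x \<Longrightarrow> anc p x w \<Longrightarrow> x \<in> S" unfolding eq by (rule t3)
qed

lemma rt_eqI: assumes "subtree S" "t \<in> S" "\<And>w. w \<in> S \<Longrightarrow> anc p t w" shows "rt p S = t"
proof -
  have a: "rt p S \<in> S" "rt p S \<in> V" using subtreeD[OF assms(1)] by auto
  have "anc p (rt p S) t" using subtreeD(4)[OF assms(1) assms(2)] .
  moreover have "anc p t (rt p S)" using assms(3)[OF a(1)] .
  ultimately show ?thesis using anc_antisym a(2) by blast
qed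

lemma subtree_convex: assumes "subtree S" "x \<in> S" "y \<in> S" "anc p x z" "anc p z y" shows "z \<in> S"
proof -
  have "anc p (rt p S) z" using anc_trans[OF subtreeD(4)[OF assms(1) assms(2)] assms(4)] .
  then show ?thesis using subtreeD(5)[OF assms(1) assms(3)] assms(5) by blast
qed

lemma subtreeI: assumes "S \<subseteq> V" "t \<in> S" "\<And>w. w \<in> S \<Longrightarrow> anc p t w"
  "\<And>w x. w \<in> S \<Longrightarrow> anc p t x \<Longrightarrow> anc p x w \<Longrightarrow> x \<in> S" shows "subtree S"
  unfolding is_subtree_def using assms by blast

lemma subtree_V: "subtree V"
proof (rule subtreeI[of V r])
  fix w x assume "w \<in> V" "anc p x w" then show "x \<in> V" using anc_in_V by blast
qed (auto simp: root_in_V anc_root)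

lemma subtree_Un_if_rt_anc:
  assumes "subtree A" "subtree B" "x \<in> A" "x \<in> B" "anc p (rt p A) (rt p B)"
  shows "subtree (A \<union> B)"
proof (rule subtreeI[of _ "rt p A"])
  show "A \<union> B \<subseteq> V" using subtreeD(1)[OF assms(1)] subtreeD(1)[OF assms(2)] by blast
  show "rt p A \<in> A \<union> B" using subtreeD(3)[OF assms(1)] by blast
  fix w assume w: "w \<in> A \<union> B"
  then show "anc p (rt p A) w"
  proof
    assume "w \<in> A" then show ?thesis using subtreeD(4)[OF assms(1)] by blast
  next
    assume "w \<in> B" then show ?thesis using subtreeD(4)[OF assms(2)] assms(5) anc_trans by blast
  qed
  fix z assume z: "anc p (rt p A) z" "anc p z w"
  show "z \<in> A \<union> B"
  proof (cases "w \<in> A")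
    case True then show ?thesis
      using subtree_convex[OF assms(1) subtreeD(3)[OF assms(1)] True] z by blast
  next
    case False
    then have wB: "w \<in> B" using w by blast
    have "anc p (rt p B) z \<or> anc p z (rt p B)"
      using anc_linear subtreeD(4)[OF assms(2) wB] z(2) by blast
    then show ?thesis
    proof
      assume "anc p (rt p B) z" then show ?thesis using subtreeD(5)[OF assms(2) wB] z by blast
    next
      assume "anc p z (rt p B)"
      then have "anc p z x" using anc_trans subtreeD(4)[OF assms(2) assms(4)] by blast
      then show ?thesis
        using subtree_convex[OF assms(1) subtreeD(3)[OF assms(1)] assms(3)] z by blast
    qed
  qed
qed

lemma subtree_Un: assumes "subtree A" "subtree B" "x \<in> A" "x \<in> B" shows "subtree (A \<union> B)"
proof -
  have "anc p (rt p A) (rt p B) \<or> anc p (rt p B) (rt p A)"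
    using anc_linear subtreeD(4)[OF assms(1) assms(3)] subtreeD(4)[OF assms(2) assms(4)] by blast
  then show ?thesis
  proof
    assume "anc p (rt p A) (rt p B)" then show ?thesis using subtree_Un_if_rt_anc[OF assms] by blast
  next
    assume "anc p (rt p B) (rt p A)"
    then have "subtree (B \<union> A)" using subtree_Un_if_rt_anc[OF assms(2,1,4,3)] by blast
    then show ?thesis by (simp add: Un_commute)
  qed
qed

lemma subtree_segment: assumes "b \<in> V" "anc p a b" shows "subtree {z. anc p a z \<and> anc p z b}"
proof (rule subtreeI[of _ a])
  show "{z. anc p a z \<and> anc p z b} \<subseteq> V" using anc_in_V assms(1) by blast
  show "a \<in> {z. anc p a z \<and> anc p z b}" using assms by simp
  fix w assume w: "w \<in> {z. anc p a z \<and> anc p z b}" then show "anc p a w" by simp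
  fix x assume "anc p a x" "anc p x w" then show "x \<in> {z. anc p a z \<and> anc p z b}"
    using anc_trans[of x w b] w by simp
qed

lemma subtree_subR: assumes "subtree R" "w \<in> R" shows "subtree (subR p R w)" "rt p (subR p R w) = w"
proof -
  show "subtree (subR p R w)" unfolding subR_def
  proof (rule subtreeI[of _ w])
    show "{x \<in> R. anc p w x} \<subseteq> V" using subtreeD(1)[OF assms(1)] by blast
    show "w \<in> {x \<in> R. anc p w x}" using assms(2) by simp
    fix y assume y: "y \<in> {x \<in> R. anc p w x}" then show "anc p w y" by simp
    fix x assume x: "anc p w x" "anc p x y"
    have "x \<in> R" using subtree_convex[OF assms(1) assms(2) _ x] y by blast
    then show "x \<in> {x \<in> R. anc p w x}" using x by simp
  qed
  then show "rt p (subR p R w) = w"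
    by (rule rt_eqI) (use assms(2) in \<open>auto simp: subR_def\<close>)
qed

lemma subtree_edge: assumes "c \<in> children V r p x" shows "subtree {x, c}"
proof (rule subtreeI[of _ x])
  show "{x, c} \<subseteq> V" using childrenD[OF assms] by auto
  show "x \<in> {x, c}" by simp
  fix w assume "w \<in> {x, c}" then show "anc p x w" using anc_child[OF assms] by auto
  fix z assume z: "anc p x z" "anc p z w"
  show "z \<in> {x, c}"
  proof (cases "w = x")
    case True then show ?thesis using z anc_antisym childrenD[OF assms] by blast
  next
    case False
    then have wc: "w = c" using \<open>w \<in> {x,c}\<close> by auto
    show ?thesis
    proof (cases "z = c")
      case False
      have "anc p z (p c)" using anc_to_parent z wc False by blast
      then have "anc p z x" using childrenD[OF assms] by simp
      then show ?thesis using z anc_antisym childrenD[OF assms] by blast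
    qed simp
  qed
qed

lemma componentD: "is_component V p A S \<Longrightarrow> subtree S \<and> S \<subseteq> A"
  unfolding is_component_def by auto

lemma component_absorb: assumes "is_component V p A S" "subtree P" "P \<subseteq> A" "x \<in> P" "x \<in> S"
  shows "P \<subseteq> S"
proof -
  have "subtree (S \<union> P)" using subtree_Un componentD[OF assms(1)] assms by blast
  moreover have "S \<subseteq> S \<union> P" by blast
  moreover have "S \<union> P \<subseteq> A" using assms componentD[OF assms(1)] by blast
  ultimately have "S \<union> P = S" using assms(1) unfolding is_component_def by blast
  then show ?thesis by blast
qed

lemma component_unique: assumes "is_component V p A S" "is_component V p A S'" "x \<in> S" "x \<in> S'"
  shows "S = S'"
  using component_absorb[OF assms(1) _ _ assms(4,3)] component_absorb[OF assms(2) _ _ assms(3,4)]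
    componentD assms by blast

lemma component_child: assumes "is_component V p A S" "x \<in> S" "c \<in> children V r p x" "c \<in> A"
  shows "c \<in> S"
  using component_absorb[OF assms(1) subtree_edge[OF assms(3)], of x] assms componentD by blast

lemma component_parent: assumes "is_component V p A S" "x \<in> S" "x \<noteq> r" "p x \<in> A" shows "p x \<in> S"
proof -
  have xV: "x \<in> V" using componentD[OF assms(1)] subtreeD assms by blast
  have "x \<in> children V r p (p x)" using children_parentI xV assms by blast
  then show ?thesis
    using component_absorb[OF assms(1) subtree_edge, of x "p x"] assms componentD by blast
qed

lemma component_exists: assumes "A \<subseteq> V" "x \<in> A" shows "\<exists>S. is_component V p A S \<and> x \<in> S"
proof -
  define P where "P = (\<lambda>S. subtree S \<and> x \<in> S \<and> S \<subseteq> A)"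
  have "subtree {x}" by (rule subtreeI[of _ x]) (use assms anc_antisym in auto)
  then have P0: "P {x}" using assms unfolding P_def by auto
  have bnd: "\<forall>S. P S \<longrightarrow> card S < Suc (card V)"
  proof (intro allI impI)
    fix S assume "P S"
    then have "S \<subseteq> V" using assms unfolding P_def by blast
    then have "card S \<le> card V" using finite_V card_mono by blast
    then show "card S < Suc (card V)" by simp
  qed
  have ex: "\<exists>S. P S \<and> (\<forall>y. P y \<longrightarrow> card y \<le> card S)"
    by (rule Lattices_Big.ex_has_greatest_nat[of P "{x}" card "Suc (card V)", OF P0 bnd])
  then obtain S where S1: "P S" and S2: "\<forall>y. P y \<longrightarrow> card y \<le> card S"
    by (elim exE conjE)
  have S: "P S" "\<And>S'. P S' \<Longrightarrow> card S' \<le> card S" using S1 S2 by blast+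
  have fA: "finite A" using finite_subset[OF assms(1) finite_V] .
  have fS: "\<And>S'. S' \<subseteq> A \<Longrightarrow> finite S'" using finite_subset[OF _ fA] by blast
  have "is_component V p A S" unfolding is_component_def
  proof (intro conjI allI impI)
    show "subtree S" "S \<subseteq> A" using S unfolding P_def by auto
    fix S' assume S': "subtree S' \<and> S \<subseteq> S' \<and> S' \<subseteq> A"
    then have "P S'" using S unfolding P_def by auto
    then have "card S' \<le> card S" using S by blast
    moreover have "finite S'" using fS S' by blast
    ultimately show "S' = S" using S' card_seteq by blast
  qed
  then show ?thesis using S unfolding P_def by auto
qed

lemma rt_if_parent_notin: assumes "subtree S" "w \<in> S" "p w \<notin> S" shows "rt p S = w"
proof (rule ccontr)
  assume ne: "rt p S \<noteq> w"
  then have "anc p (rt p S) (p w)" using anc_to_parent subtreeD[OF assms(1)] assms by blast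
  then have "p w \<in> S" using subtreeD(5)[OF assms(1) assms(2)] anc_parent by blast
  then show False using assms by blast
qed

lemma subtree_below_child:
  assumes S: "subtree S" and xS: "x \<in> S" and bx: "anc p b x" and bS: "b \<notin> S"
    and SQ: "S \<subseteq> Q" and Q: "subtree Q" and bQ: "b \<in> Q"
  shows "\<exists>w\<in>children V r p b. w \<in> Q \<and> (\<forall>y\<in>S. anc p w y)"
proof -
  define s where "s = rt p S"
  have sS: "s \<in> S" and s_top: "\<And>y. y \<in> S \<Longrightarrow> anc p s y" using subtreeD(3,4)[OF S] s_def by blast+
  have "\<not> anc p s b" using subtree_convex[OF S sS xS _ bx] bS by blast
  then have bs: "anc p b s" using anc_linear[OF s_top[OF xS] bx] by blast
  moreover have "b \<noteq> s" "s \<in> V" using bS sS SQ subtreeD(1)[OF Q] by auto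
  ultimately obtain w where w: "w \<in> children V r p b" "anc p w s" using exists_child_anc by blast
  have "w \<in> Q" using subtree_convex[OF Q bQ _ anc_child[OF w(1)] w(2)] sS SQ by blast
  then show ?thesis using w anc_trans s_top by blast
qed

lemma exists_deepest: assumes "X \<noteq> {}" "\<And>x. x \<in> X \<Longrightarrow> anc p x v" "v \<in> V"
  shows "\<exists>e\<in>X. \<forall>x\<in>X. anc p x e"
proof -
  obtain x0 where x0: "x0 \<in> X" using assms by auto
  have bnd: "\<forall>y. y \<in> X \<longrightarrow> depth y < Suc (depth v)"
  proof (intro allI impI)
    fix y assume "y \<in> X" then have "depth y \<le> depth v" using assms anc_depth_le by blast
    then show "depth y < Suc (depth v)" by simp
  qed
  obtain e where e: "e \<in> X" "\<And>y. y \<in> X \<Longrightarrow> depth y \<le> depth e"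
    using Lattices_Big.ex_has_greatest_nat[of "\<lambda>y. y \<in> X" x0 depth "Suc (depth v)", OF x0 bnd]
      by auto
  have "\<forall>x\<in>X. anc p x e"
  proof
    fix x assume x: "x \<in> X"
    have "anc p x e \<or> anc p e x" using anc_linear assms(2) x e(1) by blast
    moreover have "anc p e x \<Longrightarrow> e \<noteq> x \<Longrightarrow> False"
    proof -
      assume "anc p e x" "e \<noteq> x"
      moreover have "x \<in> V" using anc_in_V assms x by blast
      ultimately have "depth e < depth x" using anc_depth_less by blast
      then show False using e(2)[OF x] by simp
    qed
    ultimately show "anc p x e" by auto
  qed
  then show ?thesis using e by auto
qed

lemma exists_highest: assumes "X \<noteq> {}" "\<And>x. x \<in> X \<Longrightarrow> anc p x u" "u \<in> V"
  shows "\<exists>h\<in>X. \<forall>x\<in>X. anc p h x"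
proof -
  obtain x0 where x0: "x0 \<in> X" using assms by auto
  obtain h where h: "h \<in> X" "\<And>y. y \<in> X \<Longrightarrow> depth h \<le> depth y"
    using ex_has_least_nat[of "\<lambda>y. y \<in> X" x0 depth, OF x0] by auto
  have "\<forall>x\<in>X. anc p h x"
  proof
    fix x assume x: "x \<in> X"
    have "anc p x h \<or> anc p h x" using anc_linear assms(2) x h(1) by blast
    moreover have "anc p x h \<Longrightarrow> h \<noteq> x \<Longrightarrow> False"
    proof -
      assume "anc p x h" "h \<noteq> x"
      moreover have "h \<in> V" using anc_in_V assms h by blast
      ultimately have "depth x < depth h" using anc_depth_less by metis
      then show False using h(2)[OF x] by simp
    qed
    ultimately show "anc p h x" by auto
  qed
  then show ?thesis using h by auto
qed

lemma deepest_eqI: assumes "e \<in> X" "\<And>x. x \<in> X \<Longrightarrow> anc p x e" "X \<subseteq> V" shows "deepest p X = e"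
  unfolding deepest_def by (rule the_equality) (use assms anc_antisym in blast)+

lemma highest_eqI: assumes "h \<in> X" "\<And>x. x \<in> X \<Longrightarrow> anc p h x" "X \<subseteq> V" shows "highest p X = h"
  unfolding highest_def by (rule the_equality) (use assms anc_antisym in blast)+

lemma child_toward_eqI: assumes "c \<in> children V r p x" "anc p c v"
  shows "child_toward V r p x v = c"
  unfolding child_toward_def by (rule the_equality) (use assms children_anc_unique in blast)+

lemma child_toward: assumes "anc p x v" "x \<noteq> v" "v \<in> V"
  shows "child_toward V r p x v \<in> children V r p x \<and> anc p (child_toward V r p x v) v"
proof -
  obtain c where "c \<in> children V r p x" "anc p c v" using exists_child_anc[OF assms] by blast
  then show ?thesis using child_toward_eqI by simp
qed
end

locale leftmost_tree = tree +
  fixes c1 :: "'a \<Rightarrow> 'a"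
  assumes leftmost_choice: "leftmost_choice V r p c1"
begin

lemma c1_in_children: "x \<in> V \<Longrightarrow> children V r p x \<noteq> {} \<Longrightarrow> c1 x \<in> children V r p x"
  using leftmost_choice unfolding leftmost_choice_def by auto

lemma lstep_c1: "x \<in> V \<Longrightarrow> lstep V r p c1 R x \<Longrightarrow> c1 x \<in> children V r p x \<and> c1 x \<in> R"
  unfolding lstep_def using c1_in_children by blast

lemma leftmost_path: "v \<in> V \<Longrightarrow> (\<forall>j<i. lstep V r p c1 R ((c1^^j) v)) \<Longrightarrow>
   (c1^^i) v \<in> V \<and> depth ((c1^^i) v) = depth v + i \<and> anc p v ((c1^^i) v)"
proof (induction i)
  case 0 then show ?case by simp
next
  case (Suc i)
  then have IH: "(c1^^i) v \<in> V" "depth ((c1^^i) v) = depth v + i" "anc p v ((c1^^i) v)" by auto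
  have "lstep V r p c1 R ((c1^^i) v)" using Suc.prems by simp
  then have ch: "c1 ((c1^^i) v) \<in> children V r p ((c1^^i) v)" using lstep_c1 IH(1) by blast
  have e: "(c1^^Suc i) v = c1 ((c1^^i) v)" by simp
  show ?case unfolding e
    using childrenD[OF ch] depth_child[OF ch] IH anc_trans[OF IH(3) anc_child[OF ch]] by simp
qed

lemma leftmost_path_anc: assumes "v \<in> V" "\<forall>j<i'. lstep V r p c1 R ((c1^^j) v)" "i \<le> i'"
  shows "anc p ((c1^^i) v) ((c1^^i') v)"
proof -
  obtain d where d: "i' = d + i" using assms(3) by (metis le_add_diff_inverse2)
  have iV: "(c1^^i) v \<in> V" using leftmost_path[OF assms(1), of i R] assms(2,3) by auto
  have "\<forall>j<d. lstep V r p c1 R ((c1^^j) ((c1^^i) v))"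
  proof (intro allI impI)
    fix j assume "j < d"
    then have "j + i < i'" using d by simp
    then have "lstep V r p c1 R ((c1^^(j+i)) v)" using assms(2) by blast
    then show "lstep V r p c1 R ((c1^^j) ((c1^^i) v))" by (simp add: funpow_add)
  qed
  then have "anc p ((c1^^i) v) ((c1^^d) ((c1^^i) v))" using leftmost_path[OF iV] by blast
  then show ?thesis using d by (simp add: funpow_add)
qed

lemma leftmost_path_in: "v \<in> V \<Longrightarrow> v \<in> R \<Longrightarrow> (\<forall>j<i. lstep V r p c1 R ((c1^^j) v)) \<Longrightarrow> (c1^^i) v \<in> R"
proof (induction i)
  case 0 then show ?case by simp
next
  case (Suc i)
  then have "(c1^^i) v \<in> V" using leftmost_path[of v i R] by auto
  moreover have "lstep V r p c1 R ((c1^^i) v)" using Suc.prems by simp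
  ultimately show ?case using lstep_c1 by simp
qed

lemma leftmost_path_ends: assumes "v \<in> V"
  shows "\<exists>i. (\<forall>j<i. lstep V r p c1 R ((c1^^j) v)) \<and> \<not> lstep V r p c1 R ((c1^^i) v)"
proof (rule ccontr)
  assume na: "\<not> ?thesis"
  have all: "\<forall>j<i. lstep V r p c1 R ((c1^^j) v)" for i
  proof (induction i)
    case (Suc i) then show ?case using na less_Suc_eq by auto
  qed simp
  define f where "f = (\<lambda>i. (c1^^i) v)"
  have fd: "depth (f i) = depth v + i" for i using leftmost_path[OF assms all] f_def by simp
  have "inj f" unfolding inj_def
  proof (intro allI impI)
    fix x y assume "f x = f y"
    then have "depth v + x = depth v + y" using fd by metis
    then show "x = y" by simp
  qed
  moreover have "range f \<subseteq> V" using leftmost_path[OF assms all] f_def by auto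
  then have "finite (range f)" using finite_V finite_subset by blast
  ultimately have "finite (UNIV :: nat set)" using finite_imageD by blast
  then show False by simp
qed

lemma leftmost_path_end_unique:
  assumes "\<forall>j<i. lstep V r p c1 R ((c1^^j) v)" "\<not> lstep V r p c1 R ((c1^^i) v)"
  "\<forall>j<i'. lstep V r p c1 R ((c1^^j) v)" "\<not> lstep V r p c1 R ((c1^^i') v)" shows "i = i'"
proof (rule ccontr)
  assume "i \<noteq> i'"
  then have "i < i' \<or> i' < i" by arith
  then show False using assms by blast
qed

lemma lend_eqI:
  assumes "v \<in> V" "\<forall>j<i. lstep V r p c1 R ((c1^^j) v)" "\<not> lstep V r p c1 R ((c1^^i) v)"
  shows "lend V r p c1 R v = (c1^^i) v"
  unfolding lend_def
proof (rule the_equality)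
  show "onP V r p c1 R v ((c1^^i) v) \<and> \<not> lstep V r p c1 R ((c1^^i) v)"
    unfolding onP_def using assms by blast
next
  fix w assume "onP V r p c1 R v w \<and> \<not> lstep V r p c1 R w"
  then obtain i' where i': "w = (c1^^i') v" "\<forall>j<i'. lstep V r p c1 R ((c1^^j) v)"
    "\<not> lstep V r p c1 R w"
    unfolding onP_def by blast
  then have "i = i'" using leftmost_path_end_unique[OF assms(2,3)] by blast
  then show "w = (c1^^i) v" using i' by simp
qed

lemma lend_leftmost_path: assumes "v \<in> V"
  shows "\<exists>i. lend V r p c1 R v = (c1^^i) v \<and> (\<forall>j<i. lstep V r p c1 R ((c1^^j) v)) \<and>
           \<not> lstep V r p c1 R ((c1^^i) v)"
proof -
  obtain i where "\<forall>j<i. lstep V r p c1 R ((c1^^j) v)" "\<not> lstep V r p c1 R ((c1^^i) v)"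
    using leftmost_path_ends[OF assms] by blast
  then show ?thesis using lend_eqI[OF assms] by blast
qed

lemma bfirst_SomeD: assumes "v \<in> V" "bfirst V r p c1 R d v = Some b"
  shows "\<exists>i. b = (c1^^i) v \<and> (\<forall>j<i. lstep V r p c1 R ((c1^^j) v)) \<and> balanced V r p c1 R d b
     \<and> (\<forall>j<i. \<not> balanced V r p c1 R d ((c1^^j) v))"
proof -
  have ex: "\<exists>w. onP V r p c1 R v w \<and> balanced V r p c1 R d w"
    using assms(2) unfolding bfirst_def by (auto split: if_splits)
  define P where
    "P = (\<lambda>i. (\<forall>j<i. lstep V r p c1 R ((c1^^j) v)) \<and> balanced V r p c1 R d ((c1^^i) v))"
  have exP: "\<exists>i. P i" using ex unfolding P_def onP_def by blast
  define i0 where "i0 = (LEAST i. P i)"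
  have Pi0: "P i0" using exP unfolding i0_def by (rule LeastI_ex)
  have mini: "\<And>i. P i \<Longrightarrow> i0 \<le> i" unfolding i0_def by (rule Least_le)
  define b0 where "b0 = (c1^^i0) v"
  have b0prop: "onP V r p c1 R v b0 \<and> balanced V r p c1 R d b0 \<and>
      (\<forall>w'. onP V r p c1 R v w' \<and> balanced V r p c1 R d w' \<longrightarrow> anc p b0 w')"
  proof (intro conjI allI impI)
    show "onP V r p c1 R v b0" unfolding onP_def b0_def using Pi0 P_def by blast
    show "balanced V r p c1 R d b0" using Pi0 P_def b0_def by blast
    fix w' assume "onP V r p c1 R v w' \<and> balanced V r p c1 R d w'"
    then obtain i' where i': "w' = (c1^^i') v" "\<forall>j<i'. lstep V r p c1 R ((c1^^j) v)"
       "balanced V r p c1 R d w'" unfolding onP_def by blast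
    then have "P i'" unfolding P_def by blast
    then show "anc p b0 w'" using leftmost_path_anc[OF assms(1) i'(2) mini] i'(1) b0_def by blast
  qed
  have "(THE w. onP V r p c1 R v w \<and> balanced V r p c1 R d w \<and>
                 (\<forall>w'. onP V r p c1 R v w' \<and> balanced V r p c1 R d w' \<longrightarrow> anc p w w')) = b0"
  proof (rule the_equality)
    fix w assume h: "onP V r p c1 R v w \<and> balanced V r p c1 R d w \<and>
                 (\<forall>w'. onP V r p c1 R v w' \<and> balanced V r p c1 R d w' \<longrightarrow> anc p w w')"
    then have "anc p w b0" using b0prop by blast
    moreover have "anc p b0 w" using b0prop h by blast
    moreover have "b0 \<in> V" using leftmost_path[OF assms(1)] Pi0 P_def b0_def by blast
    ultimately show "w = b0" using anc_antisym by blast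
  qed (use b0prop in blast)
  then have bb: "b = b0" using assms(2) ex unfolding bfirst_def by simp
  have "\<forall>j<i0. \<not> balanced V r p c1 R d ((c1^^j) v)"
  proof (intro allI impI notI)
    fix j assume j: "j < i0" "balanced V r p c1 R d ((c1^^j) v)"
    then have "P j" using Pi0 unfolding P_def by auto
    then show False using mini j by fastforce
  qed
  then show ?thesis using bb b0_def Pi0 P_def by blast
qed

lemma bfirst_NoneD: assumes "bfirst V r p c1 R d v = None" "\<forall>j<i. lstep V r p c1 R ((c1^^j) v)"
  shows "\<not> balanced V r p c1 R d ((c1^^i) v)"
  using assms unfolding bfirst_def onP_def by (auto split: if_splits)

lemma inCV_in: "inCV V r p c1 Q d x \<Longrightarrow> subtree Q \<Longrightarrow> x \<in> Q"
proof (induction rule: inCV.induct)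
  case (cv_here R d b)
  have t: "rt p R \<in> R" "rt p R \<in> V" using subtreeD[OF cv_here.prems] by auto
  obtain i where "b = (c1^^i) (rt p R)" "\<forall>j<i. lstep V r p c1 R ((c1^^j) (rt p R))"
    using bfirst_SomeD[OF t(2) cv_here.hyps] by blast
  then show ?case using leftmost_path_in[OF t(2) t(1)] by blast
next
  case (cv_rec R d b w x)
  have "subtree (subR p R w)" using subtree_subR cv_rec by blast
  then have "x \<in> subR p R w" using cv_rec by blast
  then show ?case unfolding subR_def by blast
qed

lemma lend_in: assumes "subtree R" shows "lend V r p c1 R (rt p R) \<in> R"
proof -
  have t: "rt p R \<in> R" "rt p R \<in> V" using subtreeD[OF assms] by auto
  obtain i where "lend V r p c1 R (rt p R) = (c1^^i) (rt p R)"
    "\<forall>j<i. lstep V r p c1 R ((c1^^j) (rt p R))"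
    using lend_leftmost_path[OF t(2)] by blast
  then show ?thesis using leftmost_path_in[OF t(2) t(1)] by simp
qed

lemma subR_rt: assumes "subtree Q" shows "subR p Q (rt p Q) = Q"
  unfolding subR_def using subtreeD(4)[OF assms] by blast

lemma card_lt_if_bfirst_None:
  assumes "subtree Q" "bfirst V r p c1 Q d (rt p Q) = None" shows "real (card Q) < d"
proof -
  have "rt p Q \<in> V" using subtreeD(1,3)[OF assms(1)] by blast
  then obtain i where i: "\<forall>j<i. lstep V r p c1 Q ((c1^^j) (rt p Q))"
    "\<not> lstep V r p c1 Q ((c1^^i) (rt p Q))"
    using leftmost_path_ends by blast
  have "\<not> balanced V r p c1 Q d ((c1^^i) (rt p Q))" using bfirst_NoneD[OF assms(2) i(1)] .
  moreover have "csize V r p c1 Q ((c1^^i) (rt p Q)) = 0" unfolding csize_def using i(2) by simp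
  ultimately show ?thesis unfolding balanced_def by simp
qed

text \<open>The predecessor of \<open>b\<close> on the leftmost path is not \<open>d\<close>-balanced.\<close>
lemma card_subR_bfirst_gt:
  assumes "subtree Q" "bfirst V r p c1 Q d (rt p Q) = Some b" "b \<noteq> rt p Q"
  shows "real (card Q) - d < real (card (subR p Q b))"
proof -
  have "rt p Q \<in> V" using subtreeD(1,3)[OF assms(1)] by blast
  then obtain i where i: "b = (c1^^i) (rt p Q)" "\<forall>j<i. lstep V r p c1 Q ((c1^^j) (rt p Q))"
    "\<forall>j<i. \<not> balanced V r p c1 Q d ((c1^^j) (rt p Q))"
    using bfirst_SomeD[OF _ assms(2)] by blast
  obtain m where m: "i = Suc m" using i(1) assms(3) by (cases i) auto
  define a where "a = (c1^^m) (rt p Q)"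
  have "lstep V r p c1 Q a" using i(2) m a_def by simp
  moreover have "c1 a = b" using i(1) m a_def by simp
  moreover have "\<not> balanced V r p c1 Q d a" using i(3) m a_def by simp
  ultimately show ?thesis unfolding balanced_def csize_def by simp
qed

lemma card_lt_if_avoids_CV:
  "subtree Q \<Longrightarrow> subtree S \<Longrightarrow> S \<subseteq> Q \<Longrightarrow> \<forall>x\<in>S. \<not> inCV V r p c1 Q d x \<Longrightarrow> real (card S) < d"
proof (induction "card Q" arbitrary: Q rule: less_induct)
  case less
  have fQ: "finite Q" using subtreeD(1)[OF less.prems(1)] finite_V finite_subset by blast
  show ?case
  proof (cases "bfirst V r p c1 Q d (rt p Q)")
    case None
    then show ?thesis
      using card_lt_if_bfirst_None[OF less.prems(1) None] card_mono[OF fQ less.prems(3)] by linarith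
  next
    case (Some b)
    have bQ: "b \<in> Q" using inCV_in[OF inCV.cv_here[OF Some] less.prems(1)] .
    have bS: "b \<notin> S" using inCV.cv_here[OF Some] less.prems(4) by blast
    show ?thesis
    proof (cases "S \<inter> subR p Q b = {}")
      case True
      have "b \<noteq> rt p Q"
      proof
        assume "b = rt p Q"
        then have "S \<inter> Q = {}" using True subR_rt[OF less.prems(1)] by simp
        then show False using less.prems(3) subtreeD(2)[OF less.prems(2)] by blast
      qed
      then have "real (card Q) - d < real (card (subR p Q b))"
        using card_subR_bfirst_gt[OF less.prems(1) Some] by blast
      moreover have "card S + card (subR p Q b) \<le> card Q"
      proof -
        have "finite S" "finite (subR p Q b)"
          using fQ less.prems(3) finite_subset unfolding subR_def by auto
        then have "card S + card (subR p Q b) = card (S \<union> subR p Q b)"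
          using True by (simp add: card_Un_disjoint)
        also have "\<dots> \<le> card Q" using fQ less.prems(3) by (intro card_mono) (auto simp: subR_def)
        finally show ?thesis .
      qed
      ultimately show ?thesis by linarith
    next
      case False
      then obtain x where "x \<in> S" "anc p b x" unfolding subR_def by blast
      then obtain w where w: "w \<in> children V r p b" "w \<in> Q" "\<forall>y\<in>S. anc p w y"
        using subtree_below_child[OF less.prems(2) _ _ bS less.prems(3,1) bQ] by blast
      have "b \<notin> subR p Q w" using child_not_anc_parent[OF w(1)] unfolding subR_def by blast
      then have "card (subR p Q w) < card Q"
        using bQ fQ by (intro psubset_card_mono) (auto simp: subR_def)
      moreover have "\<forall>x\<in>S. \<not> inCV V r p c1 (subR p Q w) d x"
        using inCV.cv_rec[OF Some w(1,2)] less.prems(4) by blast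
      ultimately show ?thesis
        using less.hyps subtree_subR(1)[OF less.prems(1) w(2)] less.prems(2,3) w(3)
        unfolding subR_def by blast
    qed
  qed
qed

lemma lend_eqI_subtree:
  assumes sV: "s \<in> V" and path: "\<forall>q<n. lstep V r p c1 R ((c1^^q) s)"
    and S: "subtree S" "s \<in> S" "(c1^^n) s \<in> S" and stop: "\<not> lstep V r p c1 S ((c1^^n) s)"
  shows "lend V r p c1 S s = (c1^^n) s"
proof (rule lend_eqI[OF sV _ stop], intro allI impI)
  fix q assume q: "q < n"
  have "anc p s ((c1^^Suc q) s)" using leftmost_path_anc[OF sV, of "Suc q" R 0] path q by simp
  moreover have "anc p ((c1^^Suc q) s) ((c1^^n) s)"
    using leftmost_path_anc[OF sV path, of "Suc q"] q by simp
  ultimately have "(c1^^Suc q) s \<in> S" using subtree_convex[OF S] by blast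
  then show "lstep V r p c1 S ((c1^^q) s)" using path q unfolding lstep_def by simp
qed

lemma lstep_subR: "lstep V r p c1 (subR p R w) y \<Longrightarrow> lstep V r p c1 R y"
  unfolding lstep_def subR_def by blast

lemma inCV_leftmost_path: "inCV V r p c1 Q d x \<Longrightarrow> subtree Q \<Longrightarrow> \<exists>t0 i. x = (c1^^i) t0 \<and>
   (\<forall>j<i. lstep V r p c1 Q ((c1^^j) t0)) \<and> t0 \<in> Q \<and> (t0 = rt p Q \<or> inCV V r p c1 Q d (p t0))"
proof (induction rule: inCV.induct)
  case (cv_here R d b)
  have t: "rt p R \<in> R" "rt p R \<in> V" using subtreeD[OF cv_here.prems] by auto
  obtain i where "b = (c1^^i) (rt p R)" "\<forall>j<i. lstep V r p c1 R ((c1^^j) (rt p R))"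
    using bfirst_SomeD[OF t(2) cv_here.hyps] by blast
  then show ?case using t by blast
next
  case (cv_rec R d b w x)
  have st': "subtree (subR p R w)" "rt p (subR p R w) = w" using subtree_subR cv_rec by blast+
  obtain t0 i where ti: "x = (c1^^i) t0" "\<forall>j<i. lstep V r p c1 (subR p R w) ((c1^^j) t0)"
    "t0 \<in> subR p R w" "t0 = w \<or> inCV V r p c1 (subR p R w) d (p t0)"
    using cv_rec.IH[OF st'(1)] st'(2) by auto
  have l: "\<forall>j<i. lstep V r p c1 R ((c1^^j) t0)" using ti(2) lstep_subR by blast
  have t0R: "t0 \<in> R" using ti(3) unfolding subR_def by blast
  have "inCV V r p c1 R d (p t0)"
    using ti(4)
  proof
    assume "t0 = w"
    then have "p t0 = b" using childrenD[OF cv_rec.hyps(2)] by simp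
    then show ?thesis using inCV.cv_here[OF cv_rec.hyps(1)] by simp
  next
    assume "inCV V r p c1 (subR p R w) d (p t0)"
    then show ?thesis using inCV.cv_rec[OF cv_rec.hyps(1,2,3)] by blast
  qed
  then show ?case using ti(1) l t0R by blast
qed

lemma leftmost_path_between: "t0 \<in> V \<Longrightarrow> (\<forall>j<n. lstep V r p c1 R ((c1^^j) t0)) \<Longrightarrow> anc p t0 y \<Longrightarrow>
   anc p y ((c1^^n) t0) \<Longrightarrow> \<exists>j\<le>n. y = (c1^^j) t0"
proof (induction n arbitrary: y)
  case 0
  then have "y = t0" using anc_antisym by auto
  then show ?case by auto
next
  case (Suc n)
  define z where "z = (c1^^n) t0"
  have zV: "z \<in> V" using leftmost_path[OF Suc.prems(1), of n R] Suc.prems(2) z_def by auto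
  have "lstep V r p c1 R z" using Suc.prems(2) z_def by simp
  then have cz: "c1 z \<in> children V r p z" using lstep_c1 zV by blast
  have e: "(c1^^Suc n) t0 = c1 z" using z_def by simp
  show ?case
  proof (cases "y = c1 z")
    case True then show ?thesis using e by (intro exI[of _ "Suc n"]) simp
  next
    case False
    then have "anc p y (p (c1 z))" using anc_to_parent Suc.prems(4) e by metis
    then have "anc p y z" using childrenD[OF cz] by simp
    then obtain j where "j \<le> n" "y = (c1^^j) t0"
      using Suc.IH[OF Suc.prems(1) _ Suc.prems(3)] Suc.prems(2) z_def by auto
    then show ?thesis by (intro exI[of _ j]) simp
  qed
qed

end

locale spanner = leftmost_tree +
  fixes k :: nat
begin

abbreviation canon where "canon R \<equiv> canonical V r p c1 k R"
abbreviation C where "C R \<equiv> Cset V r p c1 k R"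
abbreviation small where "small R \<equiv> real k \<ge> real (card R) / 2 - 1"
abbreviation cv_param where "cv_param R \<equiv> real (card R) / real k"

lemma canon_V: "canon V" by (rule canonical.can_top)
lemma canon_component: "canon R \<Longrightarrow> is_component V p (R - C R) S \<Longrightarrow> canon S"
  by (rule canonical.can_rec)

lemma canon_subtree: "canon R \<Longrightarrow> subtree R"
proof (induction rule: canonical.induct)
  case can_top then show ?case by (rule subtree_V)
next
  case (can_rec R S) then show ?case using componentD by blast
qed

lemma canon_subset: "canon R \<Longrightarrow> R \<subseteq> V"
  using canon_subtree subtreeD(1) by blast

lemma canon_finite: "canon R \<Longrightarrow> finite R"
  using canon_subset finite_V finite_subset by blast

lemma C_eq: "C R = (if small R then R
    else {x. inCV V r p c1 R (cv_param R) x} \<union> {lend V r p c1 R (rt p R), rt p R})"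
  unfolding Cset_def by simp

lemma C_subset: assumes "canon R" shows "C R \<subseteq> R"
proof -
  have subtree: "subtree R" using canon_subtree assms by blast
  show ?thesis unfolding C_eq
    using inCV_in[OF _ subtree] lend_in[OF subtree] subtreeD(3)[OF subtree] by auto
qed

lemma rt_in_C: assumes "canon R" shows "rt p R \<in> C R"
  unfolding C_eq using subtreeD(3)[OF canon_subtree[OF assms]] by auto

lemma lend_in_C: assumes "canon R" shows "lend V r p c1 R (rt p R) \<in> C R"
  unfolding C_eq using lend_in[OF canon_subtree[OF assms]] by auto

lemma component_nonempty: "is_component V p A S \<Longrightarrow> S \<noteq> {}"
  using componentD subtreeD(2) by blast

lemma component_psubset: assumes "canon R" "is_component V p (R - C R) S" shows "S \<subset> R"
proof -
  have "S \<subseteq> R - C R" using componentD assms by blast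
  moreover have "rt p R \<in> R" "rt p R \<in> C R"
    using rt_in_C assms subtreeD(3)[OF canon_subtree[OF assms(1)]] by auto
  ultimately show ?thesis by blast
qed

inductive canon_at :: "nat \<Rightarrow> 'a set \<Rightarrow> bool" where
  canon_at_V: "canon_at 0 V"
| canon_at_component: "canon_at n R \<Longrightarrow> is_component V p (R - C R) S \<Longrightarrow> canon_at (Suc n) S"

lemma canon_at_level: "canon R \<Longrightarrow> \<exists>n. canon_at n R"
proof (induction rule: canonical.induct)
  case can_top then show ?case using canon_at_V by blast
next
  case (can_rec R S) then show ?case using canon_at_component by blast
qed

lemma canon_at_disjoint: "canon_at n R \<Longrightarrow> canon_at n R' \<Longrightarrow> R = R' \<or> R \<inter> R' = {}"
proof (induction arbitrary: R' rule: canon_at.induct)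
  case canon_at_V then show ?case by (cases rule: canon_at.cases) auto
next
  case (canon_at_component n R0 S)
  from canon_at_component.prems obtain R0'
    where R0': "canon_at n R0'" "is_component V p (R0' - C R0') R'"
    by (cases rule: canon_at.cases) auto
  have "R0 = R0' \<or> R0 \<inter> R0' = {}" using canon_at_component.IH R0'(1) by blast
  then show ?case
  proof
    assume "R0 = R0'"
    then show ?thesis using component_unique[OF canon_at_component.hyps(2)] R0'(2) by blast
  next
    assume "R0 \<inter> R0' = {}"
    then show ?thesis using componentD[OF canon_at_component.hyps(2)] componentD[OF R0'(2)] by blast
  qed
qed

lemma canon_at_above: "canon_at b R \<Longrightarrow> a \<le> b \<Longrightarrow> \<exists>A. canon_at a A \<and> R \<subseteq> A"
proof (induction arbitrary: a rule: canon_at.induct)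
  case canon_at_V then show ?case using canon_at.canon_at_V by blast
next
  case (canon_at_component n R0 S)
  show ?case
  proof (cases "a = Suc n")
    case True then show ?thesis using canon_at.canon_at_component canon_at_component.hyps by blast
  next
    case False
    then have "a \<le> n" using canon_at_component.prems by simp
    then obtain A where "canon_at a A" "R0 \<subseteq> A" using canon_at_component.IH by blast
    then show ?thesis using componentD[OF canon_at_component.hyps(2)] by blast
  qed
qed

lemma canon_at_above_component: assumes "canon_at b R" "a < b"
  shows "\<exists>A0 A1. canon_at a A0 \<and> is_component V p (A0 - C A0) A1 \<and> R \<subseteq> A1"
proof -
  have "Suc a \<le> b" using assms(2) by simp
  then obtain A1 where A1: "canon_at (Suc a) A1" "R \<subseteq> A1" using canon_at_above[OF assms(1)] by blast
  from A1(1) obtain A0 where "canon_at a A0" "is_component V p (A0 - C A0) A1"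
    by (cases rule: canon_at.cases) auto
  then show ?thesis using A1 by blast
qed

lemma canon_laminar:
  assumes "canon R" "canon R'" shows "R \<subseteq> R' \<or> R' \<subseteq> R \<or> R \<inter> R' = {}"
proof -
  obtain a b where a: "canon_at a R" and b: "canon_at b R'"
    using canon_at_level[OF assms(1)] canon_at_level[OF assms(2)] by blast
  show ?thesis
  proof (cases "a \<le> b")
    case True
    then obtain A where "canon_at a A" "R' \<subseteq> A" using canon_at_above[OF b] by blast
    then show ?thesis using canon_at_disjoint[OF a] by blast
  next
    case False
    then have "b \<le> a" by simp
    then obtain A where "canon_at b A" "R \<subseteq> A" using canon_at_above[OF a] by blast
    then show ?thesis using canon_at_disjoint[OF b] by blast
  qed
qed

lemma canon_psubset_component:
  assumes "canon R" "canon R'" "R \<subset> R'" shows "\<exists>S. is_component V p (R' - C R') S \<and> R \<subseteq> S"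
proof -
  obtain a b where a: "canon_at a R" and b: "canon_at b R'"
    using canon_at_level[OF assms(1)] canon_at_level[OF assms(2)] by blast
  have Rne: "R \<noteq> {}" using canon_subtree[OF assms(1)] subtreeD(2) by blast
  show ?thesis
  proof (cases "b < a")
    case True
    then obtain A0 A1 where A: "canon_at b A0" "is_component V p (A0 - C A0) A1" "R \<subseteq> A1"
      using canon_at_above_component[OF a True] by blast
    have "A1 \<subseteq> A0" using componentD[OF A(2)] by blast
    then have "R' \<inter> A0 \<noteq> {}" using A(3) assms(3) Rne by blast
    then have "A0 = R'" using canon_at_disjoint[OF b A(1)] by blast
    then show ?thesis using A by blast
  next
    case False
    then have "a \<le> b" by simp
    then obtain A where A: "canon_at a A" "R' \<subseteq> A" using canon_at_above[OF b] by blast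
    have "A \<inter> R \<noteq> {}" using A(2) assms(3) Rne by blast
    then have "A = R" using canon_at_disjoint[OF A(1) a] by blast
    then show ?thesis using A(2) assms(3) by blast
  qed
qed

definition owner :: "'a \<Rightarrow> 'a set" where "owner u = (THE R. canon R \<and> u \<in> C R)"

lemma owner_unique: assumes "canon R" "canon R'" "u \<in> C R" "u \<in> C R'" shows "R = R'"
proof (rule ccontr)
  assume "R \<noteq> R'"
  moreover have uR: "u \<in> R" "u \<in> R'" using C_subset assms by blast+
  ultimately have "R \<subset> R' \<or> R' \<subset> R" using canon_laminar[OF assms(1,2)] by blast
  then show False
    using canon_psubset_component[OF assms(1,2)] canon_psubset_component[OF assms(2,1)]
      componentD uR assms(3,4) by blast
qed

lemma owner_exists: assumes "u \<in> V" shows "\<exists>R. canon R \<and> u \<in> C R"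
proof -
  define P where "P = (\<lambda>R. canon R \<and> u \<in> R)"
  have P0: "P V" unfolding P_def using assms canon_V by blast
  obtain R where R1: "P R" and R2: "\<forall>y. P y \<longrightarrow> card R \<le> card y"
    using ex_has_least_nat[of P V card, OF P0] by (elim exE conjE)
  have canR: "canon R" "u \<in> R" using R1 P_def by auto
  show ?thesis
  proof (cases "u \<in> C R")
    case True then show ?thesis using canR by blast
  next
    case False
    have "R - C R \<subseteq> V" using canon_subset canR by blast
    then obtain S where S: "is_component V p (R - C R) S" "u \<in> S"
      using component_exists False canR by blast
    have canS: "canon S" using canon_component canR S by blast
    have "S \<subset> R" using component_psubset canR S by blast
    then have "card S < card R" using canon_finite[OF canR(1)] psubset_card_mono by blast
    moreover have "P S" unfolding P_def using canS S by blast
    ultimately show ?thesis using R2 by fastforce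
  qed
qed

lemma owner_spec: assumes "u \<in> V" shows "canon (owner u)" "u \<in> C (owner u)"
proof -
  obtain R where R: "canon R" "u \<in> C R" using owner_exists assms by blast
  have "owner u = R" unfolding owner_def by (rule the_equality) (use R owner_unique in blast)+
  then show "canon (owner u)" "u \<in> C (owner u)" using R by auto
qed

lemma owner_eqI: "canon R \<Longrightarrow> u \<in> C R \<Longrightarrow> owner u = R"
  using owner_spec owner_unique C_subset canon_subset by blast

lemma CT_eq_owner: "CT V r p c1 k u = C (owner u)"
  unfolding CT_def owner_def by simp

lemma owner_subset: assumes "canon K" "u \<in> K" shows "owner u \<subseteq> K"
proof -
  have uV: "u \<in> V" using canon_subset assms by blast
  have canT: "canon (owner u)" and uC: "u \<in> C (owner u)" using owner_spec uV by auto
  have uT: "u \<in> owner u" using C_subset canT uC by blast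
  show ?thesis
  proof (rule ccontr)
    assume "\<not> owner u \<subseteq> K"
    then have "K \<subset> owner u" using canon_laminar[OF canT assms(1)] uT assms(2) by blast
    then obtain S where "is_component V p (owner u - C (owner u)) S" "K \<subseteq> S"
      using canon_psubset_component[OF assms(1) canT] by blast
    then show False using componentD uC assms(2) by blast
  qed
qed

definition level :: "'a set \<Rightarrow> nat" where "level R = card {R'. canon R' \<and> R \<subset> R'}"

lemma finite_canon_family: "finite {R'. canon R' \<and> P R'}"
proof -
  have "{R'. canon R' \<and> P R'} \<subseteq> Pow V" using canon_subset by blast
  moreover have "finite (Pow V)" using finite_V by simp
  ultimately show ?thesis by (rule finite_subset)
qed

lemma level_component: assumes "canon R" "is_component V p (R - C R) S"
  shows "level S = Suc (level R)"
proof -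
  have SR: "S \<subset> R" using component_psubset assms by blast
  have Sne: "S \<noteq> {}" using component_nonempty assms by blast
  have eq: "{R'. canon R' \<and> S \<subset> R'} = insert R {R'. canon R' \<and> R \<subset> R'}"
  proof (intro equalityI subsetI)
    fix R' assume h: "R' \<in> {R'. canon R' \<and> S \<subset> R'}"
    then have canR': "canon R'" "S \<subset> R'" by auto
    show "R' \<in> insert R {R'. canon R' \<and> R \<subset> R'}"
    proof (cases "R' \<subset> R")
      case True
      then obtain S'' where S'': "is_component V p (R - C R) S''" "R' \<subseteq> S''"
        using canon_psubset_component[OF canR'(1) assms(1)] by blast
      then have "S = S''" using component_unique[OF assms(2) S''(1)] canR' Sne by blast
      then show ?thesis using S'' canR' by blast
    next
      case False
      then show ?thesis using canon_laminar[OF canR'(1) assms(1)] canR' SR Sne by blast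
    qed
  next
    fix R' assume "R' \<in> insert R {R'. canon R' \<and> R \<subset> R'}"
    then show "R' \<in> {R'. canon R' \<and> S \<subset> R'}" using SR assms by blast
  qed
  have "R \<notin> {R'. canon R' \<and> R \<subset> R'}" by blast
  then have "card (insert R {R'. canon R' \<and> R \<subset> R'}) = Suc (card {R'. canon R' \<and> R \<subset> R'})"
    using finite_canon_family[of "\<lambda>R'. R \<subset> R'"] by simp
  then show ?thesis unfolding level_def eq by simp
qed

lemma level_antimono: assumes "canon K" "R \<subseteq> K" shows "level K \<le> level R"
  unfolding level_def
  by (rule card_mono) (use assms finite_canon_family in auto)

lemma level_V: "level V = 0"
proof -
  have "{R'. canon R' \<and> V \<subset> R'} = {}" using canon_subset by blast
  then show ?thesis unfolding level_def by (simp only: card.empty)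
qed

lemma component_not_small: assumes "is_component V p (R - C R) S" shows "\<not> small R"
proof
  assume "small R"
  then have "C R = R" unfolding C_eq by simp
  then show False using component_nonempty[OF assms] componentD[OF assms] by blast
qed

lemma card_component_lt:
  assumes "canon R" "is_component V p (R - C R) S" shows "card S * k < card R"
proof -
  have "\<forall>x\<in>S. \<not> inCV V r p c1 R (cv_param R) x"
    using componentD[OF assms(2)] component_not_small[OF assms(2)] unfolding C_eq by auto
  then have lt: "real (card S) < real (card R) / real k"
    using card_lt_if_avoids_CV[OF canon_subtree[OF assms(1)]] componentD[OF assms(2)] by blast
  then have "k > 0" by (cases k) auto
  then have "real (card S * k) < real (card R)" using lt by (simp add: field_simps)
  then show ?thesis by linarith
qed

lemma card_level_le:
  assumes "2 \<le> k" shows "canon R \<Longrightarrow> card R * 2 ^ level R \<le> card V"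
proof (induction rule: canonical.induct)
  case can_top then show ?case using level_V by simp
next
  case (can_rec R S)
  have "level S = Suc (level R)" using level_component can_rec by blast
  moreover have "card S * 2 \<le> card S * k" using assms by simp
  then have "card S * 2 \<le> card R" using card_component_lt[OF can_rec.hyps] by linarith
  ultimately have "card S * 2 ^ level S \<le> card R * 2 ^ level R"
    by (simp add: mult.assoc mult.commute mult.left_commute)
  then show ?case using can_rec.IH by linarith
qed

lemma level_bound: assumes "2 \<le> k" "canon R" shows "2 ^ level R \<le> card V"
proof -
  have "R \<noteq> {}" using canon_subtree[OF assms(2)] subtreeD(2) by blast
  then have "card R \<ge> 1" using canon_finite[OF assms(2)] by (simp add: Suc_leI card_gt_0_iff)
  then have "2 ^ level R \<le> card R * 2 ^ level R" by simp
  then show ?thesis using card_level_le[OF assms(1) assms(2)] by linarith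
qed

lemma C_on_leftmost_path:
  assumes canR: "canon R" and nsm: "\<not> small R" and cC: "c \<in> C R"
  shows "\<exists>t0 i. c = (c1^^i) t0 \<and> (\<forall>j<i. lstep V r p c1 R ((c1^^j) t0)) \<and> t0 \<in> R \<and>
           (t0 = rt p R \<or> p t0 \<in> C R)"
proof -
  have stR: "subtree R" using canon_subtree[OF canR] .
  have rtR: "rt p R \<in> R" "rt p R \<in> V" using subtreeD(1,3)[OF stR] by auto
  consider "inCV V r p c1 R (cv_param R) c" | "c = lend V r p c1 R (rt p R)" | "c = rt p R"
    using cC nsm unfolding C_eq by auto
  then show ?thesis
  proof cases
    case 1
    then obtain t0 i where "c = (c1^^i) t0" "\<forall>j<i. lstep V r p c1 R ((c1^^j) t0)" "t0 \<in> R"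
      "t0 = rt p R \<or> inCV V r p c1 R (cv_param R) (p t0)"
      using inCV_leftmost_path[OF _ stR] by blast
    then show ?thesis using nsm unfolding C_eq by auto
  next
    case 2
    then show ?thesis using lend_leftmost_path[OF rtR(2), of R] rtR by blast
  next
    case 3
    then show ?thesis using rtR by (intro exI[of _ "rt p R"] exI[of _ 0]) simp
  qed
qed

text \<open>The leftmost path through \<open>c\<close> enters \<open>S\<close> at its root and leaves it right after \<open>w\<close>,
  so \<open>w = l(S)\<close>.\<close>
lemma C_component_if_child_in_C:
  assumes canR: "canon R" and S: "is_component V p (R - C R) S" and wS: "w \<in> S"
    and cw: "c \<in> children V r p w" and cC: "c \<in> C R"
  shows "w \<in> C S"
proof -
  have SRC: "S \<subseteq> R - C R" and stS: "subtree S" using componentD[OF S] by blast+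
  obtain t0 i where ti: "c = (c1^^i) t0" "\<forall>j<i. lstep V r p c1 R ((c1^^j) t0)" "t0 \<in> R"
    "t0 = rt p R \<or> p t0 \<in> C R"
    using C_on_leftmost_path[OF canR component_not_small[OF S] cC] by blast
  have t0V: "t0 \<in> V" using ti(3) canon_subset[OF canR] by blast
  have "c \<noteq> rt p R"
    using subtreeD(4)[OF canon_subtree[OF canR]] SRC wS child_not_anc_parent[OF cw] by blast
  then obtain m where m: "i = Suc m" using ti(1,4) childrenD[OF cw] wS SRC by (cases i) auto
  have lm: "\<forall>j<m. lstep V r p c1 R ((c1^^j) t0)" using ti(2) m by simp
  have "c \<in> children V r p ((c1^^m) t0)" "c1 ((c1^^m) t0) = c"
    using lstep_c1 leftmost_path[OF t0V lm] ti(1,2) m by auto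
  then have w: "w = (c1^^m) t0" "c1 w = c" using childrenD cw by metis+
  define s where "s = rt p S"
  have sS: "s \<in> S" and sw: "anc p s w" using subtreeD(3,4)[OF stS] wS unfolding s_def by blast+
  have t0w: "anc p t0 w" using leftmost_path[OF t0V lm] w(1) by simp
  have "anc p t0 s"
  proof (rule ccontr)
    assume "\<not> anc p t0 s"
    then have st0: "anc p s t0" "s \<noteq> t0" using anc_linear[OF sw t0w] by auto
    then have "t0 \<in> S" "p t0 \<in> S"
      using subtree_convex[OF stS sS wS _ t0w] subtree_convex[OF stS sS wS anc_to_parent[OF st0]]
        anc_trans[OF anc_parent t0w] by blast+
    then show False using ti(4) SRC rt_in_C[OF canR] by blast
  qed
  then obtain j where j: "j \<le> m" "s = (c1^^j) t0"
    using leftmost_path_between[OF t0V lm] sw w(1) by blast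
  have shift: "(c1^^q) s = (c1^^(q+j)) t0" for q using j(2) by (simp add: funpow_add)
  have "\<forall>q<m-j. lstep V r p c1 R ((c1^^q) s)" using lm shift by simp
  moreover have "(c1^^(m-j)) s = w" using shift[of "m-j"] j(1) w(1) by simp
  moreover have "s \<in> V" "\<not> lstep V r p c1 S w" using sS SRC canon_subset[OF canR] w(2) cC
    unfolding lstep_def by auto
  ultimately have "lend V r p c1 S (rt p S) = w"
    using lend_eqI_subtree[of s "m-j" R S] stS sS wS s_def by simp
  then show ?thesis using lend_in_C[OF canon_component[OF canR S]] by simp
qed

lemma C_if_child_outside: "canon R \<Longrightarrow> w \<in> R \<Longrightarrow> c \<in> children V r p w \<Longrightarrow> c \<notin> R \<Longrightarrow> w \<in> C R"
proof (induction arbitrary: w c rule: canonical.induct)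
  case can_top then show ?case using childrenD by blast
next
  case (can_rec R0 S)
  have SRC: "S \<subseteq> R0 - C R0" using componentD[OF can_rec.hyps(2)] by blast
  have cR0: "c \<in> R0"
  proof (rule ccontr)
    assume "c \<notin> R0"
    then have "w \<in> C R0" using can_rec.IH[of w c] can_rec.prems SRC by blast
    then show False using can_rec.prems SRC by blast
  qed
  have "c \<in> C R0"
  proof (rule ccontr)
    assume "c \<notin> C R0"
    then have "c \<in> S" using component_child[OF can_rec.hyps(2) can_rec.prems(1,2)] cR0 by blast
    then show False using can_rec.prems by blast
  qed
  then show ?case using C_component_if_child_in_C[OF can_rec.hyps can_rec.prems(1,2)] by blast
qed

lemma component_child_in_C:
  assumes "canon R0" "is_component V p (R0 - C R0) S" "w \<in> S" "z \<in> children V r p w" "z \<notin> S"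
  shows "z \<in> C R0"
proof -
  have SRC: "S \<subseteq> R0 - C R0" using componentD[OF assms(2)] by blast
  have "z \<in> R0" using C_if_child_outside[OF assms(1) _ assms(4)] assms(3) SRC by blast
  then show ?thesis using component_child[OF assms(2,3,4)] assms(5) by blast
qed

lemma component_parent_in_C:
  assumes "canon R0" "is_component V p (R0 - C R0) S" "w \<in> S" "w \<noteq> r" "p w \<notin> S"
  shows "p w \<in> C R0"
proof -
  have SRC: "S \<subseteq> R0 - C R0" using componentD[OF assms(2)] by blast
  have stR: "subtree R0" using canon_subtree[OF assms(1)] .
  have wR: "w \<in> R0" using assms(3) SRC by blast
  have "rt p R0 \<noteq> w" using rt_in_C[OF assms(1)] assms(3) SRC by blast
  then have "anc p (rt p R0) (p w)" using anc_to_parent subtreeD(4)[OF stR wR] by blast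
  then have "p w \<in> R0" using subtreeD(5)[OF stR wR] anc_parent by blast
  then show ?thesis using component_parent[OF assms(2,3,4)] assms(5) by blast
qed

lemma canon_parent_exists: "canon R \<Longrightarrow> R \<noteq> V \<Longrightarrow> \<exists>R0. canon R0 \<and> is_component V p (R0 - C R0) R"
  by (cases rule: canonical.cases) auto

lemma canon_parent_subset: assumes "canon K" "canon R0" "is_component V p (R0 - C R0) R" "R \<subset> K"
  shows "R0 \<subseteq> K"
proof -
  have Rne: "R \<noteq> {}" using component_nonempty[OF assms(3)] .
  have RR0: "R \<subseteq> R0" using componentD[OF assms(3)] by blast
  show ?thesis
  proof (rule ccontr)
    assume "\<not> R0 \<subseteq> K"
    then have "K \<subset> R0" using canon_laminar[OF assms(1,2)] assms(4) RR0 Rne by blast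
    then obtain S where S: "is_component V p (R0 - C R0) S" "K \<subseteq> S"
      using canon_psubset_component[OF assms(1,2)] by blast
    then have "S = R" using component_unique[OF S(1) assms(3)] assms(4) Rne by blast
    then show False using S assms(4) by blast
  qed
qed

lemma route_step_cost: "snd (route_step V r p c1 k v u) \<le> 2"
  unfolding route_step_def Let_def mv_def by auto

abbreviation hop :: "'a \<Rightarrow> 'a \<Rightarrow> 'a" where
  "hop v u \<equiv> fst (route_step V r p c1 k v u)"

definition down_move :: "'a \<Rightarrow> 'a \<Rightarrow> 'a" where
  "down_move u t = child_toward V r p (deepest p {x \<in> C (owner u). anc p x t}) t"

definition up_move :: "'a \<Rightarrow> 'a \<Rightarrow> 'a" where
  "up_move u t = p (highest p {x \<in> C (owner u). anc p t x \<and> anc p x u})"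

lemma hop_adj: "adjG V r p c1 k u v \<Longrightarrow> hop v u = v"
  unfolding route_step_def by simp

lemma hop_descendant: "\<not> adjG V r p c1 k u v \<Longrightarrow> anc p u v \<Longrightarrow> hop v u = down_move u v"
  unfolding route_step_def Let_def CT_eq_owner down_move_def by simp

lemma hop_ancestor:
  "\<not> adjG V r p c1 k u v \<Longrightarrow> \<not> anc p u v \<Longrightarrow> anc p v u \<Longrightarrow> hop v u = up_move u v"
  unfolding route_step_def Let_def CT_eq_owner up_move_def by simp

lemma hop_unrelated_up: "\<not> adjG V r p c1 k u v \<Longrightarrow> \<not> anc p u v \<Longrightarrow> \<not> anc p v u \<Longrightarrow>
  {x \<in> C (owner u). anc p x v \<and> \<not> anc p x u} = {} \<Longrightarrow>
  hop v u = p (highest p {y \<in> C (owner u). anc p y u \<and> \<not> anc p y v})"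
  unfolding route_step_def Let_def CT_eq_owner by simp

lemma hop_unrelated_down: "\<not> adjG V r p c1 k u v \<Longrightarrow> \<not> anc p u v \<Longrightarrow> \<not> anc p v u \<Longrightarrow>
  {x \<in> C (owner u). anc p x v \<and> \<not> anc p x u} \<noteq> {} \<Longrightarrow>
  hop v u = child_toward V r p (deepest p {x \<in> C (owner u). anc p x v \<and> \<not> anc p x u}) v"
  unfolding route_step_def Let_def CT_eq_owner by (simp only: if_False if_True) simp

lemma adjG_if_in_C: assumes "u \<in> V" "v \<in> V" "u \<noteq> v" "v \<in> C (owner u)" shows "adjG V r p c1 k u v"
  unfolding adjG_def using assms owner_spec[OF assms(1)] by blast

definition max_level :: nat where "max_level = Max (level ` {R. canon R})"

lemma level_le_max: "canon R \<Longrightarrow> level R \<le> max_level"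
  unfolding max_level_def by (rule Max_ge) (use finite_canon_family[of "\<lambda>_. True"] in auto)

lemma max_level_le_log:
  assumes "2 \<le> k" shows "real max_level \<le> log 2 (real (card V))"
proof -
  have "max_level \<in> level ` {R. canon R}" unfolding max_level_def
    by (rule Max_in) (use finite_canon_family[of "\<lambda>_. True"] canon_V in auto)
  then obtain R where "canon R" "max_level = level R" by blast
  then have "2 ^ max_level \<le> card V" using level_bound[OF assms] by simp
  then have "(2::real) powr real max_level \<le> real (card V)"
    by (metis of_nat_le_iff of_nat_numeral of_nat_power powr_realpow zero_less_numeral)
  moreover have "0 < real (card V)" using finite_V root_in_V by (auto simp: card_gt_0_iff)
  ultimately show ?thesis using le_log_iff[of 2 "real (card V)" "real max_level"] by simp
qed

definition potential :: "'a \<Rightarrow> 'a set \<Rightarrow> nat" where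
  "potential u K = 2 * (max_level - level K) + (level (owner u) - level K)"

lemma potential_owner_le: assumes "u \<in> V" "canon K" "u \<in> K"
  shows "potential u (owner u) \<le> potential u K"
proof -
  have "level K \<le> level (owner u)" using level_antimono[OF assms(2) owner_subset[OF assms(2,3)]] .
  moreover have "level (owner u) \<le> max_level" using level_le_max owner_spec assms by blast
  ultimately show ?thesis unfolding potential_def by simp
qed

lemma potential_V_le: assumes "u \<in> V" shows "potential u V \<le> 3 * max_level"
proof -
  have "level (owner u) \<le> max_level" using level_le_max owner_spec assms by blast
  then show ?thesis unfolding potential_def level_V by simp
qed

lemma potential_climb:
  assumes uV: "u \<in> V" and canK: "canon K" and sub: "owner u \<subset> K" and zK: "z \<in> K" and zT: "z \<notin> owner u"
    and wT: "w \<in> owner u" and adj: "z \<in> children V r p w \<or> (w \<noteq> r \<and> z = p w)"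
  shows "potential z K < potential u K"
proof -
  define R where "R = owner u"
  have canR: "canon R" using owner_spec uV R_def by blast
  have "R \<noteq> V" using sub canon_subset[OF canK] R_def by blast
  then obtain R0 where R0: "canon R0" "is_component V p (R0 - C R0) R"
    using canon_parent_exists canR by blast
  have zC: "z \<in> C R0"
    using adj
  proof
    assume "z \<in> children V r p w" then show ?thesis
      using component_child_in_C[OF R0 _ _ zT[folded R_def]] wT R_def by blast
  next
    assume "w \<noteq> r \<and> z = p w" then show ?thesis
      using component_parent_in_C[OF R0, of w] zT wT R_def by blast
  qed
  have owner_z: "owner z = R0" using owner_eqI[OF R0(1) zC] .
  have "R0 \<subseteq> K" using canon_parent_subset[OF canK R0] sub R_def by blast
  then have "level K \<le> level R0" using level_antimono[OF canK] by blast
  moreover have "level R = Suc (level R0)" using level_component[OF R0] .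
  ultimately show ?thesis unfolding potential_def owner_z R_def[symmetric] by simp
qed

lemma potential_descend:
  assumes uV: "u \<in> V" and S: "is_component V p (owner u - C (owner u)) S" and zC: "z \<in> C S"
  shows "potential z S < potential u (owner u)"
proof -
  have canR: "canon (owner u)" using owner_spec uV by blast
  have canS: "canon S" using canon_component[OF canR S] .
  have owner_z: "owner z = S" using owner_eqI[OF canS zC] .
  have "level S = Suc (level (owner u))" using level_component[OF canR S] .
  moreover have "level S \<le> max_level" using level_le_max canS by blast
  ultimately show ?thesis unfolding potential_def owner_z by simp
qed

definition progress :: "'a \<Rightarrow> 'a \<Rightarrow> 'a set \<Rightarrow> 'a \<Rightarrow> bool" where
  "progress t u K z \<longleftrightarrow> (\<exists>K'. canon K' \<and> z \<in> K' \<and> t \<in> K' \<and> potential z K' < potential u K)"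

lemma progress_owner:
  assumes "progress t u (owner u) z" "u \<in> V" "canon K" "u \<in> K" shows "progress t u K z"
  using assms(1) potential_owner_le[OF assms(2-4)]
    unfolding progress_def by (meson order_less_le_trans)

lemma progress_climb:
  assumes "u \<in> V" "canon K" "u \<in> K" "t \<in> K" "t \<notin> owner u" "z \<in> K" "z \<notin> owner u" "w \<in> owner u"
    "z \<in> children V r p w \<or> (w \<noteq> r \<and> z = p w)"
  shows "progress t u K z"
proof -
  have "owner u \<subset> K" using owner_subset assms(2-5) by blast
  then show ?thesis using potential_climb assms unfolding progress_def by blast
qed

lemma progress_enter_component:
  assumes uV: "u \<in> V" and bV: "b \<in> V" and ab: "anc p a b"
    and seg: "{x. anc p a x \<and> anc p x b} \<subseteq> owner u - C (owner u)"
    and zt: "z \<in> {a, b}" "t \<in> {a, b}"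
    and adj: "(z \<noteq> r \<and> p z \<in> C (owner u)) \<or> (\<exists>c\<in>children V r p z. c \<in> C (owner u))"
  shows "progress t u (owner u) z"
proof -
  define R where "R = owner u"
  define P where "P = {x. anc p a x \<and> anc p x b}"
  have canR: "canon R" using owner_spec uV R_def by blast
  have zP: "z \<in> P" and tP: "t \<in> P" using zt ab unfolding P_def by auto
  have "R - C R \<subseteq> V" using canon_subset[OF canR] by blast
  then obtain S where S: "is_component V p (R - C R) S" "z \<in> S"
    using component_exists zP seg unfolding P_def R_def by blast
  have canS: "canon S" using canon_component[OF canR S(1)] .
  have SRC: "S \<subseteq> R - C R" using componentD[OF S(1)] by blast
  have "P \<subseteq> S" using component_absorb[OF S(1) subtree_segment[OF bV ab]] seg zP S(2)
    unfolding P_def R_def by blast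
  then have "t \<in> S" using tP by blast
  moreover have "z \<in> C S"
    using adj
  proof
    assume "z \<noteq> r \<and> p z \<in> C (owner u)"
    then have "rt p S = z" using rt_if_parent_notin[OF canon_subtree[OF canS] S(2)] SRC R_def by blast
    then show ?thesis using rt_in_C[OF canS] by simp
  next
    assume "\<exists>c\<in>children V r p z. c \<in> C (owner u)"
    then obtain c where "c \<in> children V r p z" "c \<notin> S" using SRC R_def by blast
    then show ?thesis using C_if_child_outside[OF canS S(2)] by blast
  qed
  ultimately show ?thesis
    using potential_descend[OF uV S(1)[unfolded R_def]] canS S(2) unfolding progress_def by blast
qed

lemma down_move_outside:
  assumes uV: "u \<in> V" and vV: "v \<in> V" and uv: "anc p u v" and vR: "v \<notin> owner u"
    and canK: "canon K" and uK: "u \<in> K" and vK: "v \<in> K"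
  shows "anc p (down_move u v) v \<and> progress v u K (down_move u v)"
proof -
  define R where "R = owner u"
  have canR: "canon R" and uR: "u \<in> R" using owner_spec[OF uV] C_subset R_def by blast+
  have "\<exists>e\<in>{x \<in> R. anc p x v}. \<forall>x\<in>{x \<in> R. anc p x v}. anc p x e"
    by (rule exists_deepest) (use uR uv vV in auto)
  then obtain e where e: "e \<in> R" "anc p e v" and deepest_e: "\<And>x. x \<in> R \<Longrightarrow> anc p x v \<Longrightarrow> anc p x e"
    by blast
  define e' where "e' = child_toward V r p e v"
  have "e \<noteq> v" using e(1) vR R_def by blast
  then have e': "e' \<in> children V r p e" "anc p e' v"
    using child_toward[OF e(2) _ vV] e'_def by auto
  have e'R: "e' \<notin> R" using deepest_e e'(2) child_not_anc_parent[OF e'(1)] by blast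
  have "e \<in> C R" using C_if_child_outside[OF canR e(1) e'(1) e'R] .
  then have "deepest p {x \<in> C R. anc p x v} = e"
    using deepest_e e(2) C_subset[OF canR] canon_subset[OF canR] by (intro deepest_eqI) auto
  then have move: "down_move u v = e'" unfolding down_move_def e'_def R_def by simp
  have "anc p u e'" using anc_trans[OF deepest_e[OF uR uv] anc_child[OF e'(1)]] .
  then have "e' \<in> K" using subtree_convex[OF canon_subtree[OF canK] uK vK _ e'(2)] by blast
  then have "progress v u K e'"
    using progress_climb[OF uV canK uK vK vR _ e'R[unfolded R_def] e(1)[unfolded R_def]] e'(1)
      by blast
  then show ?thesis using move e'(2) by simp
qed

lemma down_move_inside:
  assumes uV: "u \<in> V" and vV: "v \<in> V" and uv: "anc p u v"
    and vR: "v \<in> owner u" and vC: "v \<notin> C (owner u)"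
  shows "anc p (down_move u v) v \<and> progress v u (owner u) (down_move u v)"
proof -
  define R where "R = owner u"
  have canR: "canon R" and uC: "u \<in> C R" using owner_spec uV R_def by auto
  have "\<exists>x\<in>{x \<in> C R. anc p x v}. \<forall>y\<in>{x \<in> C R. anc p x v}. anc p y x"
    by (rule exists_deepest) (use uC uv vV in auto)
  then obtain x where x: "x \<in> C R" "anc p x v"
    and deepest_x: "\<And>y. y \<in> C R \<Longrightarrow> anc p y v \<Longrightarrow> anc p y x"
    by blast
  have "deepest p {x \<in> C R. anc p x v} = x"
    using deepest_x x C_subset[OF canR] canon_subset[OF canR] by (intro deepest_eqI) auto
  then have move: "down_move u v = child_toward V r p x v" unfolding down_move_def R_def by simp
  define x' where "x' = child_toward V r p x v"
  have x': "x' \<in> children V r p x" "anc p x' v"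
    using child_toward[OF x(2) _ vV] x(1) vC x'_def R_def by auto
  have "{z. anc p x' z \<and> anc p z v} \<subseteq> R - C R"
  proof
    fix z assume z: "z \<in> {z. anc p x' z \<and> anc p z v}"
    have "anc p x z" using anc_trans[OF anc_child[OF x'(1)]] z by blast
    then have "z \<in> R"
      using subtree_convex[OF canon_subtree[OF canR] _ vR[folded R_def]] x(1) C_subset[OF canR] z
        by blast
    moreover have "z \<notin> C R" using deepest_x z anc_trans child_not_anc_parent[OF x'(1)] by blast
    ultimately show "z \<in> R - C R" by blast
  qed
  moreover have "x' \<noteq> r \<and> p x' \<in> C R" using childrenD[OF x'(1)] x(1) by simp
  ultimately have "progress v u (owner u) x'"
    using progress_enter_component[OF uV vV x'(2), of x' v] R_def by simp
  then show ?thesis using move x'(2) x'_def by simp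
qed

lemma down_move_progress:
  assumes "u \<in> V" "v \<in> V" "anc p u v" "v \<notin> C (owner u)" "canon K" "u \<in> K" "v \<in> K"
  shows "anc p (down_move u v) v \<and> progress v u K (down_move u v)"
proof (cases "v \<in> owner u")
  case True
  then show ?thesis
    using down_move_inside[OF assms(1-3) True assms(4)] progress_owner[OF _ assms(1,5,6)] by blast
qed (use down_move_outside[OF assms(1-3) _ assms(5-7)] in blast)

lemma up_move_outside:
  assumes uV: "u \<in> V" and tu: "anc p t u" and tR: "t \<notin> owner u"
    and canK: "canon K" and uK: "u \<in> K" and tK: "t \<in> K"
  shows "anc p t (up_move u t) \<and> anc p (up_move u t) u \<and> progress t u K (up_move u t)"
proof -
  define R where "R = owner u"
  define h where "h = rt p R"
  have canR: "canon R" and uR: "u \<in> R" using owner_spec[OF uV] C_subset R_def by blast+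
  have stR: "subtree R" using canon_subtree[OF canR] .
  have hR: "h \<in> R" and h_top: "\<And>x. x \<in> R \<Longrightarrow> anc p h x"
    using subtreeD(3,4)[OF stR] unfolding h_def by blast+
  have hu: "anc p h u" using h_top[OF uR] .
  have "t \<notin> R" using tR R_def by simp
  then have "\<not> anc p h t" using subtree_convex[OF stR hR uR _ tu] by blast
  then have th: "anc p t h" using anc_linear[OF tu hu] by blast
  have "h \<in> C R" using rt_in_C[OF canR] h_def by simp
  then have "highest p {x \<in> C R. anc p t x \<and> anc p x u} = h"
    using th hu h_top C_subset[OF canR] canon_subset[OF canR] by (intro highest_eqI) blast+
  then have move: "up_move u t = p h" unfolding up_move_def R_def by simp
  have "t \<noteq> h" using hR \<open>t \<notin> R\<close> by blast
  moreover have "h \<in> V" using hR canon_subset[OF canR] by blast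
  ultimately have h_child: "h \<in> children V r p (p h)" and tph: "anc p t (p h)"
    using proper_descendant_parent[OF th] by blast+
  have phR: "p h \<notin> owner u" using h_top child_not_anc_parent[OF h_child] R_def by blast
  have phu: "anc p (p h) u" using anc_trans[OF anc_parent hu] .
  have "p h \<in> K" using subtree_convex[OF canon_subtree[OF canK] tK uK tph phu] .
  moreover have "h \<noteq> r" using childrenD[OF h_child] by blast
  ultimately have "progress t u K (p h)"
    using progress_climb[OF uV canK uK tK tR _ phR, of h] hR R_def by blast
  then show ?thesis using move tph phu by simp
qed

lemma up_move_inside:
  assumes uV: "u \<in> V" and tu: "anc p t u" and tR: "t \<in> owner u" and tC: "t \<notin> C (owner u)"
  shows "anc p t (up_move u t) \<and> anc p (up_move u t) u \<and> progress t u (owner u) (up_move u t)"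
proof -
  define R where "R = owner u"
  have canR: "canon R" and uC: "u \<in> C R" using owner_spec uV R_def by auto
  have uR: "u \<in> R" using C_subset[OF canR] uC by blast
  have "\<exists>h\<in>{x \<in> C R. anc p t x \<and> anc p x u}. \<forall>y\<in>{x \<in> C R. anc p t x \<and> anc p x u}. anc p h y"
    by (rule exists_highest) (use uC tu uV in auto)
  then obtain h where h: "h \<in> C R" "anc p t h" "anc p h u"
    and highest_h: "\<And>y. y \<in> C R \<Longrightarrow> anc p t y \<Longrightarrow> anc p y u \<Longrightarrow> anc p h y"
    by blast
  have "highest p {x \<in> C R. anc p t x \<and> anc p x u} = h"
    using h highest_h C_subset[OF canR] canon_subset[OF canR] by (intro highest_eqI) auto
  then have move: "up_move u t = p h" unfolding up_move_def R_def by simp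
  have "t \<noteq> h" "h \<in> V" using h(1) tC C_subset[OF canR] canon_subset[OF canR] R_def by auto
  then have h_child: "h \<in> children V r p (p h)" and tph: "anc p t (p h)"
    using proper_descendant_parent[OF h(2)] by auto
  have phu: "anc p (p h) u" using anc_trans[OF anc_parent h(3)] .
  have "{z. anc p t z \<and> anc p z (p h)} \<subseteq> R - C R"
  proof
    fix z assume z: "z \<in> {z. anc p t z \<and> anc p z (p h)}"
    then have zu: "anc p z u" using anc_trans phu by blast
    then have "z \<in> R" using subtree_convex[OF canon_subtree[OF canR] tR[folded R_def] uR] z by blast
    moreover have "z \<notin> C R" using highest_h z zu anc_trans child_not_anc_parent[OF h_child] by blast
    ultimately show "z \<in> R - C R" by blast
  qed
  moreover have "p h \<in> V" using childrenD[OF h_child] by blast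
  ultimately have "progress t u (owner u) (p h)"
    using progress_enter_component[OF uV _ tph, of "p h" t] h_child h(1) R_def by auto
  then show ?thesis using move tph phu by simp
qed

lemma up_move_progress:
  assumes "u \<in> V" "anc p t u" "t \<notin> C (owner u)" "canon K" "u \<in> K" "t \<in> K"
  shows "anc p t (up_move u t) \<and> anc p (up_move u t) u \<and> progress t u K (up_move u t)"
proof (cases "t \<in> owner u")
  case True
  then show ?thesis
    using up_move_inside[OF assms(1,2) True assms(3)] progress_owner[OF _ assms(1,4,5)] by blast
qed (use up_move_outside[OF assms(1,2) _ assms(4-6)] in blast)

lemma hop_comparable:
  assumes uV: "u \<in> V" and vV: "v \<in> V" and "u \<noteq> v" and comparable: "anc p u v \<or> anc p v u"
    and nadj: "\<not> adjG V r p c1 k u v" and K: "canon K" "u \<in> K" "v \<in> K"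
  shows "(anc p (hop v u) v \<or> anc p v (hop v u)) \<and> progress v u K (hop v u)"
proof -
  have vC: "v \<notin> C (owner u)" using adjG_if_in_C assms(1-3) nadj by blast
  show ?thesis
  proof (cases "anc p u v")
    case True
    then show ?thesis
      using hop_descendant[OF nadj True] down_move_progress[OF uV vV True vC K] by simp
  next
    case False
    then show ?thesis
      using comparable hop_ancestor[OF nadj False] up_move_progress[OF uV _ vC K] by simp
  qed
qed

lemma hop_unrelated:
  assumes uV: "u \<in> V" and vV: "v \<in> V" and unrel: "\<not> anc p u v" "\<not> anc p v u"
    and a': "anc p a' u" "\<not> anc p a' v" "anc p (p a') v"
    and nadj: "\<not> adjG V r p c1 k u v" and canK: "canon K" "u \<in> K" "a' \<in> K"
  shows "anc p (hop v u) v \<or> (anc p a' (hop v u) \<and> anc p (hop v u) u \<and> progress a' u K (hop v u))"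
proof -
  define R where "R = owner u"
  have canR: "canon R" using owner_spec uV R_def by blast
  have CRV: "C R \<subseteq> V" using C_subset[OF canR] canon_subset[OF canR] by blast
  define X where "X = {x \<in> C R. anc p x v \<and> \<not> anc p x u}"
  show ?thesis
  proof (cases "X = {}")
    case False
    obtain x where x: "x \<in> X" "\<And>y. y \<in> X \<Longrightarrow> anc p y x"
      using exists_deepest[of X v] False vV X_def by blast
    then have "deepest p X = x" using CRV X_def by (intro deepest_eqI) auto
    moreover have "x \<noteq> v" using x(1) adjG_if_in_C[OF uV vV] nadj unrel X_def R_def by auto
    then have "anc p (child_toward V r p x v) v" using child_toward x(1) vV X_def by auto
    ultimately show ?thesis using hop_unrelated_down[OF nadj unrel] False X_def R_def by simp
  next
    case True
    have "{y \<in> C R. anc p y u \<and> \<not> anc p y v} = {y \<in> C R. anc p a' y \<and> anc p y u}"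
    proof -
      have "anc p a' y" if "anc p y u" "\<not> anc p y v" for y
        using anc_linear[OF that(1) a'(1)] anc_to_parent[of y a'] anc_trans[of y "p a'" v]
          a'(3) that(2)
        by blast
      moreover have "\<not> anc p y v" if "anc p a' y" for y using that a'(2) anc_trans by blast
      ultimately show ?thesis by blast
    qed
    then have move: "hop v u = p (highest p {y \<in> C R. anc p a' y \<and> anc p y u})"
      using hop_unrelated_up[OF nadj unrel] True X_def R_def by simp
    show ?thesis
    proof (cases "a' \<in> C R")
      case True
      then have "highest p {y \<in> C R. anc p a' y \<and> anc p y u} = a'"
        using a'(1) CRV by (intro highest_eqI) auto
      then show ?thesis using move a'(3) by simp
    next
      case False
      then show ?thesis
        using move up_move_progress[OF uV a'(1) _ canK] unfolding up_move_def R_def by simp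
    qed
  qed
qed

definition reaches :: "'a \<Rightarrow> 'a \<Rightarrow> nat \<Rightarrow> bool" where
  "reaches v u n \<longleftrightarrow> (\<exists>N\<le>n. route_pos V r p c1 k u v N = v)"

lemma reaches_refl: "reaches v v n"
  unfolding reaches_def route_pos_def by (intro exI[of _ 0]) simp

lemma reaches_hop: assumes "reaches v (hop v u) n" "n < m" shows "reaches v u m"
proof -
  obtain N where "N \<le> n" "route_pos V r p c1 k (hop v u) v N = v"
    using assms(1) unfolding reaches_def by blast
  moreover have "route_pos V r p c1 k u v (Suc N) = route_pos V r p c1 k (hop v u) v N"
    unfolding route_pos_def by (simp add: funpow_Suc_right del: funpow.simps)
  ultimately show ?thesis unfolding reaches_def using assms(2) by (intro exI[of _ "Suc N"]) auto
qed

lemma reaches_mono: "reaches v u n \<Longrightarrow> n \<le> m \<Longrightarrow> reaches v u m"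
  unfolding reaches_def by (meson order_trans)

lemma reaches_adj: assumes "adjG V r p c1 k u v" "0 < m" shows "reaches v u m"
  using reaches_hop[of v u 0 m] reaches_refl hop_adj[OF assms(1)] assms(2) by simp

lemma reaches_comparable:
  "v \<in> V \<Longrightarrow> u \<in> V \<Longrightarrow> anc p u v \<or> anc p v u \<Longrightarrow> canon K \<Longrightarrow> u \<in> K \<Longrightarrow> v \<in> K \<Longrightarrow>
   reaches v u (Suc (potential u K))"
proof (induction "potential u K" arbitrary: u K rule: less_induct)
  case less
  consider "u = v" | "adjG V r p c1 k u v" | "u \<noteq> v" "\<not> adjG V r p c1 k u v" by blast
  then show ?case
  proof cases
    case 1 then show ?thesis using reaches_refl by simp
  next
    case 2 then show ?thesis using reaches_adj by simp
  next
    case 3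
    then have hop: "(anc p (hop v u) v \<or> anc p v (hop v u)) \<and> progress v u K (hop v u)"
      using hop_comparable less.prems by blast
    then obtain K' where
      K': "canon K'" "hop v u \<in> K'" "v \<in> K'" "potential (hop v u) K' < potential u K"
      unfolding progress_def by blast
    moreover have "hop v u \<in> V" using canon_subset K'(1,2) by blast
    ultimately have "reaches v (hop v u) (Suc (potential (hop v u) K'))"
      using less.hyps[OF K'(4) less.prems(1)] hop K'(1-3) by blast
    then show ?thesis using reaches_hop K'(4) by simp
  qed
qed

lemma reaches_unrelated:
  "v \<in> V \<Longrightarrow> u \<in> V \<Longrightarrow> \<not> anc p u v \<Longrightarrow> \<not> anc p v u \<Longrightarrow>
   anc p a' u \<Longrightarrow> \<not> anc p a' v \<Longrightarrow> anc p (p a') v \<Longrightarrow> canon K \<Longrightarrow> u \<in> K \<Longrightarrow> a' \<in> K \<Longrightarrow>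
   reaches v u (potential u K + 3 * max_level + 2)"
proof (induction "potential u K" arbitrary: u K rule: less_induct)
  case less
  show ?case
  proof (cases "adjG V r p c1 k u v")
    case True then show ?thesis using reaches_adj by simp
  next
    case False
    then consider (ancestor) "anc p (hop v u) v"
      | (unrelated) "anc p a' (hop v u)" "anc p (hop v u) u" "progress a' u K (hop v u)"
      using hop_unrelated less.prems by blast
    then show ?thesis
    proof cases
      case ancestor
      then have "hop v u \<in> V" using anc_in_V less.prems(1) by blast
      then have "reaches v (hop v u) (Suc (potential (hop v u) V))"
        using reaches_comparable less.prems(1) ancestor canon_V by blast
      moreover have "potential (hop v u) V \<le> 3 * max_level"
        using potential_V_le \<open>hop v u \<in> V\<close> by blast
      ultimately show ?thesis using reaches_hop by simp
    next
      case unrelated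
      then obtain K' where K': "canon K'" "hop v u \<in> K'" "a' \<in> K'"
        "potential (hop v u) K' < potential u K"
        unfolding progress_def by blast
      have "\<not> anc p (hop v u) v" "\<not> anc p v (hop v u)"
        using unrelated(1,2) less.prems(4,6) anc_trans by blast+
      moreover have "hop v u \<in> V" using canon_subset K'(1,2) by blast
      ultimately have "reaches v (hop v u) (potential (hop v u) K' + 3 * max_level + 2)"
        using less.hyps[OF K'(4) less.prems(1)] less.prems(6,7) unrelated(1) K'(1-3) by blast
      then show ?thesis using reaches_hop K'(4) by simp
    qed
  qed
qed

lemma reaches_within_levels:
  assumes uV: "u \<in> V" and vV: "v \<in> V" shows "reaches v u (6 * max_level + 2)"
proof -
  have pot: "potential u V \<le> 3 * max_level" using potential_V_le[OF uV] .
  show ?thesis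
  proof (cases "anc p u v \<or> anc p v u")
    case True
    then show ?thesis
      using reaches_mono[OF reaches_comparable[OF vV uV True canon_V uV vV]] pot by simp
  next
    case False
    have "\<exists>a\<in>{x. anc p x u \<and> anc p x v}. \<forall>x\<in>{x. anc p x u \<and> anc p x v}. anc p x a"
      by (rule exists_deepest) (use anc_root uV vV in auto)
    then obtain a where a: "anc p a u" "anc p a v"
      and lca: "\<And>x. anc p x u \<Longrightarrow> anc p x v \<Longrightarrow> anc p x a"
      by blast
    obtain a' where a': "a' \<in> children V r p a" "anc p a' u"
      using exists_child_anc[OF a(1) _ uV] a(2) False by blast
    have "\<not> anc p a' v" using lca a'(2) child_not_anc_parent[OF a'(1)] by blast
    then have "reaches v u (potential u V + 3 * max_level + 2)"
      using reaches_unrelated[OF vV uV _ _ a'(2) _ _ canon_V uV] False a(2) childrenD[OF a'(1)]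
        by auto
    then show ?thesis using reaches_mono pot by simp
  qed
qed

lemma route_arrives:
  assumes "u \<in> V" "v \<in> V"
  obtains N where "N \<le> 6 * max_level + 2" "route_pos V r p c1 k u v N = v"
    "\<forall>i<N. route_pos V r p c1 k u v i \<noteq> v"
proof -
  define N where "N = (LEAST N. route_pos V r p c1 k u v N = v)"
  obtain M where M: "M \<le> 6 * max_level + 2" "route_pos V r p c1 k u v M = v"
    using reaches_within_levels[OF assms] unfolding reaches_def by blast
  have "route_pos V r p c1 k u v N = v" unfolding N_def using M(2) by (rule LeastI)
  moreover have "N \<le> M" unfolding N_def using M(2) by (rule Least_le)
  moreover have "\<forall>i<N. route_pos V r p c1 k u v i \<noteq> v" unfolding N_def using not_less_Least by blast
  ultimately show ?thesis using that[of N] M(1) le_trans by blast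
qed

theorem route_cost_log:
  assumes k: "2 \<le> k" and uV: "u \<in> V" and vV: "v \<in> V"
  shows "\<exists>N. route_pos V r p c1 k u v N = v \<and> (\<forall>i<N. route_pos V r p c1 k u v i \<noteq> v) \<and>
           real (\<Sum>i<N. snd (route_step V r p c1 k v (route_pos V r p c1 k u v i)))
             \<le> 16 * log 2 (real (card V))"
proof -
  let ?pos = "route_pos V r p c1 k u v"
  let ?cost = "\<lambda>i. snd (route_step V r p c1 k v (?pos i))"
  obtain N where N: "N \<le> 6 * max_level + 2" "?pos N = v" "\<forall>i<N. ?pos i \<noteq> v"
    using route_arrives[OF uV vV] .
  have "sum ?cost {..<N} \<le> 2 * N"
    using sum_bounded_above[of "{..<N}" ?cost 2] route_step_cost by (simp add: mult.commute)
  then have cost: "real (sum ?cost {..<N}) \<le> real (2 * N)" by (rule of_nat_mono)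
  have "real (2 * N) \<le> 16 * log 2 (real (card V))"
  proof (cases "u = v")
    case True
    then have "N = 0" using N(3) by (cases N) (auto simp: route_pos_def)
    moreover have "card V \<ge> 1" using card_mono[of V "{r}"] finite_V root_in_V by simp
    ultimately show ?thesis by simp
  next
    case False
    then have "card {u, v} \<le> card V" using uV vV finite_V by (intro card_mono) auto
    then have "1 \<le> log 2 (real (card V))" using False by simp
    then show ?thesis using N(1) max_level_le_log[OF k] by simp
  qed
  then show ?thesis using N(2,3) cost by (meson order_trans)
qed

end

theorem theorem3:
  fixes k :: nat
  assumes "k \<ge> 4"
  shows "\<exists>c::real. \<forall>(V::nat set) r p c1 u v.
           rooted_tree V r p \<and> leftmost_choice V r p c1 \<and> u \<in> V \<and> v \<in> V \<longrightarrow>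
           (\<exists>N. route_pos V r p c1 k u v N = v \<and> (\<forall>i<N. route_pos V r p c1 k u v i \<noteq> v) \<and>
                real (\<Sum>i<N. snd (route_step V r p c1 k v (route_pos V r p c1 k u v i)))
                  \<le> c * log 2 (real (card V)))"
proof (rule exI[of _ "16::real"], intro allI impI)
  fix V :: "nat set" and r p c1 u v
  assume h: "rooted_tree V r p \<and> leftmost_choice V r p c1 \<and> u \<in> V \<and> v \<in> V"
  then interpret spanner V r p c1 k
    by unfold_locales blast+
  show "\<exists>N. route_pos V r p c1 k u v N = v \<and> (\<forall>i<N. route_pos V r p c1 k u v i \<noteq> v) \<and>
          real (\<Sum>i<N. snd (route_step V r p c1 k v (route_pos V r p c1 k u v i)))
            \<le> 16 * log 2 (real (card V))"
    using route_cost_log assms h by simp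
qed

end
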